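(* Let $\delta\neq0$ be real, let $T$ be the two-level system with Hamiltonian $H_T=\delta|1\rangle\langle1|$ and $|+\rangle_\delta=\frac1{\sqrt2}(|0\rangle+|1\rangle)$. Let $L$ be a positive integer, $K>L$ an integer, $T'$ the system with Hamiltonian $H_{T'}=\sum_{k=-K}^{K}k\delta|k\rangle\langle k|$, and $|\eta_L\rangle=\frac1{\sqrt L}\sum_{j=0}^{L-1}|j\rangle$ on $T'$. Then for every $\epsilon>0$ there exist an integer $m$ and a covariant operation $\Phi:T^{\otimes m}\to T'$ such that $\|\Phi(|+\rangle\langle+|_\delta^{\otimes m})-|\eta_L\rangle\langle\eta_L|\|_1\le\epsilon$.
   Context: A channel $\Phi:X\to X'$ is covariant if $\Phi(e^{-iH_Xt}\rho e^{iH_Xt})=e^{-iH_{X'}t}\Phi(\rho)e^{iH_{X'}t}$ for all $t\in\mathbb{R}$; Hamiltonians of composite systems are sums of local ones. *)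

theory Defs
  imports Complex_Main "Jordan_Normal_Form.Matrix"
begin

definition tr :: "complex mat \<Rightarrow> complex" where
  "tr A = (\<Sum>i<dim_row A. A $$ (i, i))"

definition adj :: "complex mat \<Rightarrow> complex mat" where
  "adj A = mat (dim_col A) (dim_row A) (\<lambda>(i, j). cnj (A $$ (j, i)))"

definition hermitian :: "complex mat \<Rightarrow> bool" where
  "hermitian A \<longleftrightarrow> A \<in> carrier_mat (dim_row A) (dim_row A) \<and> adj A = A"

definition psd :: "complex mat \<Rightarrow> bool" where
  "psd A \<longleftrightarrow> hermitian A \<and>
     (\<forall>v::complex vec. dim_vec v = dim_row A \<longrightarrow> Re (conjugate v \<bullet> (A *\<^sub>v v)) \<ge> 0)"

definition trace_norm :: "complex mat \<Rightarrow> real" where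
  "trace_norm A = Re (tr (THE S. psd S \<and> dim_row S = dim_col A \<and> S * S = adj A * A))"

definition kron :: "complex mat \<Rightarrow> complex mat \<Rightarrow> complex mat" where
  "kron A B = mat (dim_row A * dim_row B) (dim_col A * dim_col B)
     (\<lambda>(p, q). A $$ (p div dim_row B, q div dim_col B) * B $$ (p mod dim_row B, q mod dim_col B))"

fun tensor_pow :: "complex mat \<Rightarrow> nat \<Rightarrow> complex mat" where
  "tensor_pow A 0 = 1\<^sub>m 1"
| "tensor_pow A (Suc m) = kron (tensor_pow A m) A"

text \<open>Hamiltonian of the composite T^{\<otimes>m}: sum of local Hamiltonians,
  H_{m+1} = H_m \<otimes> I + I \<otimes> H.\<close>
fun ham_pow :: "complex mat \<Rightarrow> nat \<Rightarrow> complex mat" where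
  "ham_pow H 0 = 0\<^sub>m 1 1"
| "ham_pow H (Suc m) = kron (ham_pow H m) (1\<^sub>m (dim_row H)) + kron (1\<^sub>m (dim_row (ham_pow H m))) H"

text \<open>Time evolution e^{-iHt} for a diagonal Hamiltonian H (all Hamiltonians in this
  statement are diagonal in the chosen bases; the exponential of a diagonal matrix is
  the diagonal matrix of exponentials).\<close>
definition evol :: "complex mat \<Rightarrow> real \<Rightarrow> complex mat" where
  "evol H t = mat (dim_row H) (dim_row H)
     (\<lambda>(i, j). if i = j then exp (- \<i> * complex_of_real t * H $$ (i, i)) else 0)"

definition lin_map :: "nat \<Rightarrow> nat \<Rightarrow> (complex mat \<Rightarrow> complex mat) \<Rightarrow> bool" where
  "lin_map d d' \<Phi> \<longleftrightarrow>
     (\<forall>A \<in> carrier_mat d d. \<Phi> A \<in> carrier_mat d' d') \<and>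
     (\<forall>A \<in> carrier_mat d d. \<forall>B \<in> carrier_mat d d. \<Phi> (A + B) = \<Phi> A + \<Phi> B) \<and>
     (\<forall>A \<in> carrier_mat d d. \<forall>c. \<Phi> (c \<cdot>\<^sub>m A) = c \<cdot>\<^sub>m \<Phi> A)"

text \<open>(\<Phi> \<otimes> id_n) applied to a (d*n) x (d*n) matrix X, regarded as an n x n block matrix
  of d x d blocks (index a * d + i).\<close>
definition ampliate :: "nat \<Rightarrow> nat \<Rightarrow> nat \<Rightarrow> (complex mat \<Rightarrow> complex mat) \<Rightarrow> complex mat \<Rightarrow> complex mat" where
  "ampliate d d' n \<Phi> X = mat (n * d') (n * d')
     (\<lambda>(p, q). \<Phi> (mat d d (\<lambda>(i, j). X $$ ((p div d') * d + i, (q div d') * d + j)))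
                 $$ (p mod d', q mod d'))"

definition completely_positive :: "nat \<Rightarrow> nat \<Rightarrow> (complex mat \<Rightarrow> complex mat) \<Rightarrow> bool" where
  "completely_positive d d' \<Phi> \<longleftrightarrow>
     (\<forall>n X. n > 0 \<longrightarrow> X \<in> carrier_mat (n * d) (n * d) \<longrightarrow> psd X \<longrightarrow> psd (ampliate d d' n \<Phi> X))"

definition trace_preserving :: "nat \<Rightarrow> (complex mat \<Rightarrow> complex mat) \<Rightarrow> bool" where
  "trace_preserving d \<Phi> \<longleftrightarrow> (\<forall>A \<in> carrier_mat d d. tr (\<Phi> A) = tr A)"

definition channel :: "nat \<Rightarrow> nat \<Rightarrow> (complex mat \<Rightarrow> complex mat) \<Rightarrow> bool" where
  "channel d d' \<Phi> \<longleftrightarrow> lin_map d d' \<Phi> \<and> completely_positive d d' \<Phi> \<and> trace_preserving d \<Phi>"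

definition covariant_channel :: "complex mat \<Rightarrow> complex mat \<Rightarrow> (complex mat \<Rightarrow> complex mat) \<Rightarrow> bool" where
  "covariant_channel H H' \<Phi> \<longleftrightarrow> channel (dim_row H) (dim_row H') \<Phi> \<and>
     (\<forall>t::real. \<forall>\<rho> \<in> carrier_mat (dim_row H) (dim_row H).
        \<Phi> (evol H t * \<rho> * adj (evol H t)) = evol H' t * \<Phi> \<rho> * adj (evol H' t))"

definition proj :: "complex vec \<Rightarrow> complex mat" where
  "proj v = mat (dim_vec v) (dim_vec v) (\<lambda>(i, j). v $ i * cnj (v $ j))"

definition H_T :: "real \<Rightarrow> complex mat" where
  "H_T \<delta> = mat 2 2 (\<lambda>(i, j). if i = 1 \<and> j = 1 then complex_of_real \<delta> else 0)"

definition plus_state :: "complex vec" where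
  "plus_state = vec 2 (\<lambda>_. complex_of_real (1 / sqrt 2))"

text \<open>The system T': basis |k>, k = -K..K, stored at index k + K; H_T' = \<Sum> k \<delta> |k><k|.\<close>
definition H_T' :: "real \<Rightarrow> nat \<Rightarrow> complex mat" where
  "H_T' \<delta> K = mat (2 * K + 1) (2 * K + 1)
     (\<lambda>(i, j). if i = j then complex_of_real ((real i - real K) * \<delta>) else 0)"

text \<open>|\<eta>_L> = (1/sqrt L) \<Sum>_{j=0}^{L-1} |j> on T' (|j> at index j + K).\<close>
definition eta_state :: "nat \<Rightarrow> nat \<Rightarrow> complex vec" where
  "eta_state K L = vec (2 * K + 1)
     (\<lambda>i. if K \<le> i \<and> i < K + L then complex_of_real (1 / sqrt (real L)) else 0)"

end

(*
  The basis state x of m copies of T, a binary string, has energy delta times its Hamming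
  weight. Group the weights into blocks {q L, ..., q L + L - 1}. Inside block q one can choose
  as many disjoint L-tuples of basis states, one of each weight of the block, as the smallest
  binomial coefficient in the block. The isometry sending such a tuple onto |0>, ..., |L-1> of T'
  shifts all energies by the same amount q L delta, hence is covariant, and it maps the part of
  |+>^m supported on the tuple to a multiple of |eta_L>. The remaining basis states are measured
  and replaced by the maximally mixed state on |0>, ..., |L-1>, which is covariant as well.
  If u is the fraction of remaining basis states, the output differs from |eta_L><eta_L| by
  (u / L) (I - J) on span {|0>, ..., |L-1>}, J being the all-ones matrix, and this has trace norm
  at most 2 u. As neighbouring binomial coefficients are close, a total variation bound gives
  u <= 4 L (m choose m/2) / 2^m <= 4 L / sqrt (m + 1) for even m, which tends to 0.
*)
theory Submission
  imports Defs
begin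

section \<open>Positive semidefinite matrices and the trace norm\<close>

definition quad_form :: "nat \<Rightarrow> complex mat \<Rightarrow> (nat \<Rightarrow> complex) \<Rightarrow> complex" where
  "quad_form n A v = (\<Sum>i<n. \<Sum>j<n. cnj (v i) * A $$ (i,j) * v j)"

definition hermitian_mat :: "nat \<Rightarrow> complex mat \<Rightarrow> bool" where
  "hermitian_mat n A \<longleftrightarrow> (\<forall>i<n. \<forall>j<n. A $$ (j,i) = cnj (A $$ (i,j)))"

lemma hermitian_matD: "hermitian_mat n A \<Longrightarrow> i < n \<Longrightarrow> j < n \<Longrightarrow> A $$ (j,i) = cnj (A $$ (i,j))"
  unfolding hermitian_mat_def by blast

lemma index_mult_mat_sum:
  assumes "A \<in> carrier_mat n m" "B \<in> carrier_mat m p" "i < n" "j < p"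
  shows "(A * B) $$ (i,j) = (\<Sum>k<m. A $$ (i,k) * B $$ (k,j))"
  using assms by (simp add: scalar_prod_def atLeast0LessThan)

lemma scalar_prod_mult_mat_vec_eq_quad_form:
  assumes "A \<in> carrier_mat n n" "dim_vec v = n"
  shows "conjugate v \<bullet> (A *\<^sub>v v) = quad_form n A (\<lambda>i. v $ i)"
  unfolding quad_form_def scalar_prod_def using assms
  by (auto simp: row_def scalar_prod_def sum_distrib_left mult.assoc atLeast0LessThan intro!: sum.cong)

lemma hermitian_iff_hermitian_mat:
  assumes "A \<in> carrier_mat n n"
  shows "hermitian A \<longleftrightarrow> hermitian_mat n A"
proof
  assume "hermitian A"
  then have "adj A = A" by (simp add: hermitian_def)
  then show "hermitian_mat n A"
    unfolding hermitian_mat_def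
  proof (intro allI impI)
    fix i j assume "i < n" "j < n"
    then show "A $$ (j,i) = cnj (A $$ (i,j))"
      using assms arg_cong[OF \<open>adj A = A\<close>, of "\<lambda>M. M $$ (j,i)"] by (simp add: adj_def)
  qed
next
  assume hA: "hermitian_mat n A"
  have "adj A = A"
  proof (rule eq_matI)
    fix i j assume "i < dim_row A" "j < dim_col A"
    then show "adj A $$ (i,j) = A $$ (i,j)"
      using assms hermitian_matD[OF hA, of j i] by (simp add: adj_def)
  qed (use assms in \<open>auto simp: adj_def\<close>)
  then show "hermitian A" using assms by (simp add: hermitian_def)
qed

lemma psd_iff_quad_form:
  assumes A: "A \<in> carrier_mat n n"
  shows "psd A \<longleftrightarrow> hermitian_mat n A \<and> (\<forall>v. 0 \<le> Re (quad_form n A v))"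
proof -
  have vec_eq: "quad_form n A v = conjugate (vec n v) \<bullet> (A *\<^sub>v vec n v)" for v
    by (subst scalar_prod_mult_mat_vec_eq_quad_form[OF A]) (simp_all add: quad_form_def)
  have "(\<forall>v::complex vec. dim_vec v = dim_row A \<longrightarrow> 0 \<le> Re (conjugate v \<bullet> (A *\<^sub>v v)))
      \<longleftrightarrow> (\<forall>v. 0 \<le> Re (quad_form n A v))"
  proof
    assume "\<forall>v::complex vec. dim_vec v = dim_row A \<longrightarrow> 0 \<le> Re (conjugate v \<bullet> (A *\<^sub>v v))"
    then show "\<forall>v. 0 \<le> Re (quad_form n A v)" using A by (simp add: vec_eq)
  qed (use scalar_prod_mult_mat_vec_eq_quad_form[OF A] A in auto)
  then show ?thesis
    unfolding psd_def hermitian_iff_hermitian_mat[OF A] by blast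
qed

lemma quad_form_add_scaled:
  fixes r :: real
  shows "quad_form n A (\<lambda>i. v i + of_real r * w i) = quad_form n A v
     + of_real r * ((\<Sum>i<n. \<Sum>j<n. cnj (v i) * A $$ (i,j) * w j) + (\<Sum>i<n. \<Sum>j<n. cnj (w i) * A $$ (i,j) * v j))
     + of_real (r^2) * quad_form n A w"
proof -
  have "cnj (v i + of_real r * w i) * A $$ (i,j) * (v j + of_real r * w j) =
      cnj (v i) * A $$ (i,j) * v j
      + of_real r * (cnj (v i) * A $$ (i,j) * w j) + of_real r * (cnj (w i) * A $$ (i,j) * v j)
      + of_real (r^2) * (cnj (w i) * A $$ (i,j) * w j)" for i j
    by (simp add: algebra_simps power2_eq_square)
  then show ?thesis unfolding quad_form_def
    by (simp only: sum.distrib flip: sum_distrib_left) (simp only: distrib_left add.assoc)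
qed

lemma sum_cnj_mult_self: "(\<Sum>i\<in>I. cnj (w i) * w i) = of_real (\<Sum>i\<in>I. (cmod (w i))^2)"
  unfolding of_real_sum by (intro sum.cong refl) (simp add: complex_norm_square mult.commute del: of_real_power)

text \<open>Moving from \<open>v\<close> by \<open>r A v\<close> changes the form by \<open>2 r |A v|\<^sup>2 + O(r\<^sup>2)\<close>, which is
  negative for small \<open>r < 0\<close> unless \<open>A v = 0\<close>.\<close>

lemma psd_quad_form_eq_0_imp_kernel:
  assumes H: "hermitian_mat n A" and P: "\<forall>v. 0 \<le> Re (quad_form n A v)"
    and z: "Re (quad_form n A v) = 0" and i: "i < n"
  shows "(\<Sum>j<n. A $$ (i,j) * v j) = 0"
proof -
  define w where "w i = (\<Sum>j<n. A $$ (i,j) * v j)" for i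
  define a where "a = (\<Sum>i<n. (cmod (w i))^2)"
  have wAv: "(\<Sum>i<n. \<Sum>j<n. cnj (w i) * A $$ (i,j) * v j) = of_real a"
    unfolding a_def sum_cnj_mult_self[symmetric] by (simp add: w_def sum_distrib_left mult.assoc)
  have vAw: "(\<Sum>i<n. \<Sum>j<n. cnj (v i) * A $$ (i,j) * w j) = of_real a"
  proof -
    have "(\<Sum>i<n. cnj (v i) * A $$ (i,j)) = cnj (w j)" if "j < n" for j
      unfolding w_def cnj_sum
      by (intro sum.cong refl) (simp add: hermitian_matD[OF H that] mult.commute)
    then have "(\<Sum>j<n. (\<Sum>i<n. cnj (v i) * A $$ (i,j)) * w j) = (\<Sum>j<n. cnj (w j) * w j)"
      by simp
    moreover have "(\<Sum>i<n. \<Sum>j<n. cnj (v i) * A $$ (i,j) * w j)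
        = (\<Sum>j<n. (\<Sum>i<n. cnj (v i) * A $$ (i,j)) * w j)"
      by (subst sum.swap) (simp add: sum_distrib_right)
    ultimately show ?thesis unfolding a_def sum_cnj_mult_self by simp
  qed
  define c where "c = Re (quad_form n A w)"
  have c0: "c \<ge> 0" using P c_def by auto
  have key: "0 \<le> 2 * r * a + r^2 * c" for r :: real
  proof -
    have "0 \<le> Re (quad_form n A (\<lambda>i. v i + of_real r * w i))" using P by auto
    also have "\<dots> = 2 * r * a + r^2 * c"
      unfolding quad_form_add_scaled vAw wAv c_def using z by simp
    finally show ?thesis .
  qed
  have a0: "a = 0"
  proof (rule ccontr)
    assume "a \<noteq> 0"
    moreover have "a \<ge> 0" unfolding a_def by (simp add: sum_nonneg)
    ultimately have ap: "a > 0" by simp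
    define r where "r = - a / (c + 1)"
    have "r < 0" unfolding r_def using ap c0 by simp
    moreover have "a * c / (c + 1) \<le> a" using c0 ap by (simp add: divide_le_eq)
    then have "2 * a + r * c > 0" unfolding r_def using ap by simp
    ultimately have "r * (2 * a + r * c) < 0" by (simp add: mult_neg_pos)
    moreover have "0 \<le> r * (2 * a + r * c)" using key[of r] by (simp add: algebra_simps power2_eq_square)
    ultimately show False by simp
  qed
  then have "\<forall>i\<in>{..<n}. (cmod (w i))^2 = 0"
    unfolding a_def by (simp add: sum_nonneg_eq_0_iff)
  then show ?thesis using i by (simp add: w_def)
qed

lemma hermitian_square_diag_eq_0_imp_zero:
  assumes hX: "hermitian_mat n X" and sq: "\<And>k. k < n \<Longrightarrow> (\<Sum>j<n. X $$ (k,j) * X $$ (j,k)) = 0"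
    and kl: "k < n" "l < n"
  shows "X $$ (k,l) = 0"
proof -
  have "(\<Sum>j<n. X $$ (k,j) * X $$ (j,k)) = (\<Sum>j<n. cnj (X $$ (k,j)) * X $$ (k,j))"
    by (intro sum.cong refl) (simp add: hermitian_matD[OF hX kl(1)])
  then have "complex_of_real (\<Sum>j<n. (cmod (X $$ (k,j)))^2) = 0"
    using sq[OF kl(1)] unfolding sum_cnj_mult_self by simp
  then have "\<forall>j\<in>{..<n}. (cmod (X $$ (k,j)))^2 = 0"
    by (simp only: of_real_eq_0_iff) (simp add: sum_nonneg_eq_0_iff)
  then show ?thesis using kl by simp
qed

text \<open>The two sums are \<open>tr (X S X)\<close> and \<open>tr (X R X)\<close>; the hypothesis says \<open>S X = - X R\<close>, so
  the first equals \<open>- tr (X X R)\<close>, which is minus the second by cyclicity of the trace.\<close>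

lemma sum_quad_form_columns_eq_0:
  assumes hX: "hermitian_mat n X"
    and SX: "\<And>k i. k < n \<Longrightarrow> i < n \<Longrightarrow>
      (\<Sum>l<n. S $$ (k,l) * X $$ (l,i)) = - (\<Sum>l<n. X $$ (k,l) * R $$ (l,i))"
  shows "(\<Sum>i<n. quad_form n S (\<lambda>k. X $$ (k,i))) + (\<Sum>i<n. quad_form n R (\<lambda>k. X $$ (k,i))) = 0"
proof -
  have cnjX: "cnj (X $$ (k,i)) = X $$ (i,k)" if "i < n" "k < n" for i k
    using hermitian_matD[OF hX that] by simp
  have "(\<Sum>i<n. quad_form n S (\<lambda>k. X $$ (k,i)))
      = (\<Sum>i<n. \<Sum>k<n. X $$ (i,k) * (\<Sum>l<n. S $$ (k,l) * X $$ (l,i)))"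
    unfolding quad_form_def by (intro sum.cong refl) (simp add: sum_distrib_left mult.assoc cnjX)
  also have "\<dots> = - (\<Sum>i<n. \<Sum>k<n. \<Sum>l<n. X $$ (i,k) * X $$ (k,l) * R $$ (l,i))"
    by (simp add: SX sum_negf sum_distrib_left mult.assoc)
  finally have S_part: "(\<Sum>i<n. quad_form n S (\<lambda>k. X $$ (k,i))) =
    - (\<Sum>i<n. \<Sum>k<n. \<Sum>l<n. X $$ (i,k) * X $$ (k,l) * R $$ (l,i))" .
  have "(\<Sum>i<n. quad_form n R (\<lambda>k. X $$ (k,i)))
      = (\<Sum>l<n. \<Sum>i<n. \<Sum>k<n. X $$ (l,i) * R $$ (i,k) * X $$ (k,l))"
    unfolding quad_form_def by (intro sum.cong refl) (simp add: cnjX)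
  also have "\<dots> = (\<Sum>l<n. \<Sum>k<n. \<Sum>i<n. X $$ (l,i) * R $$ (i,k) * X $$ (k,l))"
    by (intro sum.cong refl sum.swap)
  also have "\<dots> = (\<Sum>k<n. \<Sum>l<n. \<Sum>i<n. X $$ (l,i) * R $$ (i,k) * X $$ (k,l))"
    by (rule sum.swap)
  also have "\<dots> = (\<Sum>i<n. \<Sum>k<n. \<Sum>l<n. X $$ (i,k) * X $$ (k,l) * R $$ (l,i))"
    by (intro sum.cong refl) (simp only: ac_simps)
  finally show ?thesis using S_part by simp
qed

text \<open>With \<open>X = S - R\<close>, both sums of the previous lemma have nonnegative real parts, so they
  vanish; hence the columns of \<open>X\<close> lie in the kernels of \<open>S\<close> and \<open>R\<close>, and \<open>X\<^sup>2 = 0\<close>.\<close>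

lemma psd_sqrt_unique:
  assumes S: "S \<in> carrier_mat n n" and R: "R \<in> carrier_mat n n"
    and pS: "psd S" and pR: "psd R" and SR: "S * S = R * R"
  shows "S = R"
proof -
  have hS: "hermitian_mat n S" and qS: "\<forall>v. 0 \<le> Re (quad_form n S v)"
    using pS psd_iff_quad_form[OF S] by auto
  have hR: "hermitian_mat n R" and qR: "\<forall>v. 0 \<le> Re (quad_form n R v)"
    using pR psd_iff_quad_form[OF R] by auto
  define X where "X = S - R"
  have X: "X $$ (i,j) = S $$ (i,j) - R $$ (i,j)" if "i < n" "j < n" for i j
    using S R that by (simp add: X_def)
  have hX: "hermitian_mat n X"
    unfolding hermitian_mat_def
  proof (intro allI impI)
    fix i j assume ij: "i < n" "j < n"
    then show "X $$ (j,i) = cnj (X $$ (i,j))"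
      using hermitian_matD[OF hS ij] hermitian_matD[OF hR ij] by (simp add: X)
  qed
  have SX: "(\<Sum>l<n. S $$ (k,l) * X $$ (l,i)) = - (\<Sum>l<n. X $$ (k,l) * R $$ (l,i))"
    if "k < n" "i < n" for k i
  proof -
    have "(\<Sum>l<n. S $$ (k,l) * X $$ (l,i)) + (\<Sum>l<n. X $$ (k,l) * R $$ (l,i))
        = (\<Sum>l<n. S $$ (k,l) * S $$ (l,i)) - (\<Sum>l<n. R $$ (k,l) * R $$ (l,i))"
      unfolding sum.distrib[symmetric] sum_subtractf[symmetric]
      using that by (intro sum.cong refl) (simp add: X algebra_simps)
    also have "\<dots> = 0"
      using arg_cong[OF SR, of "\<lambda>M. M $$ (k,i)"] that
      by (simp add: index_mult_mat_sum[OF S S] index_mult_mat_sum[OF R R])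
    finally show ?thesis by (simp only: eq_neg_iff_add_eq_0)
  qed
  let ?T = "\<lambda>M. \<Sum>i<n. quad_form n M (\<lambda>k. X $$ (k,i))"
  have nonneg: "0 \<le> Re (?T M)" if "\<forall>v. 0 \<le> Re (quad_form n M v)" for M
    unfolding Re_sum using that by (intro sum_nonneg) auto
  have zero: "Re (quad_form n M (\<lambda>k. X $$ (k,i))) = 0"
    if "\<forall>v. 0 \<le> Re (quad_form n M v)" "Re (?T M) = 0" "i < n" for M i
    using that sum_nonneg_eq_0_iff[of "{..<n}" "\<lambda>i. Re (quad_form n M (\<lambda>k. X $$ (k,i)))"]
    unfolding Re_sum by auto
  have "Re (?T S) + Re (?T R) = 0"
    using arg_cong[OF sum_quad_form_columns_eq_0[OF hX SX], of Re] by simp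
  then have TS: "Re (?T S) = 0" and TR: "Re (?T R) = 0"
    using nonneg[OF qS] nonneg[OF qR] by linarith+
  have "(\<Sum>j<n. X $$ (k,j) * X $$ (j,k)) = 0" if "k < n" for k
  proof -
    have "(\<Sum>j<n. X $$ (k,j) * X $$ (j,k))
        = (\<Sum>j<n. S $$ (k,j) * X $$ (j,k)) - (\<Sum>j<n. R $$ (k,j) * X $$ (j,k))"
      unfolding sum_subtractf[symmetric] using that by (intro sum.cong refl) (simp add: X algebra_simps)
    then show ?thesis
      using psd_quad_form_eq_0_imp_kernel[OF hS qS zero[OF qS TS that] that]
        psd_quad_form_eq_0_imp_kernel[OF hR qR zero[OF qR TR that] that] by simp
  qed
  then have "X $$ (i,j) = 0" if "i < n" "j < n" for i j
    using hermitian_square_diag_eq_0_imp_zero[OF hX _ that] by blast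
  then show ?thesis
    by (intro eq_matI) (use S R X in auto)
qed

lemma trace_norm_eqI:
  assumes A: "A \<in> carrier_mat n n" and S: "S \<in> carrier_mat n n" and pS: "psd S"
    and SS: "S * S = adj A * A"
  shows "trace_norm A = Re (tr S)"
proof -
  have "(THE S'. psd S' \<and> dim_row S' = dim_col A \<and> S' * S' = adj A * A) = S"
  proof (rule the_equality)
    show "psd S \<and> dim_row S = dim_col A \<and> S * S = adj A * A" using pS S A SS by simp
  next
    fix S' assume H: "psd S' \<and> dim_row S' = dim_col A \<and> S' * S' = adj A * A"
    then have "S' \<in> carrier_mat n n" using A unfolding psd_def hermitian_def by auto
    then show "S' = S" using psd_sqrt_unique[OF _ S, of S'] H pS SS by auto
  qed
  then show ?thesis unfolding trace_norm_def by simp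
qed

section \<open>Matrices of the form \<open>x I + y J\<close> on a block of indices\<close>

definition block_mat :: "nat \<Rightarrow> nat \<Rightarrow> nat \<Rightarrow> complex \<Rightarrow> complex \<Rightarrow> complex mat" where
  "block_mat n K L x y = mat n n (\<lambda>(a,b).
     if K \<le> a \<and> a < K + L \<and> K \<le> b \<and> b < K + L then (if a = b then x else 0) + y else 0)"

lemma block_mat_carrier[simp]: "block_mat n K L x y \<in> carrier_mat n n"
  by (simp add: block_mat_def)

lemma block_mat_dim[simp]: "dim_row (block_mat n K L x y) = n" "dim_col (block_mat n K L x y) = n"
  by (simp_all add: block_mat_def)

lemma index_block_mat: "a < n \<Longrightarrow> b < n \<Longrightarrow> block_mat n K L x y $$ (a,b) =
  (if K \<le> a \<and> a < K + L \<and> K \<le> b \<and> b < K + L then (if a = b then x else 0) + y else 0)"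
  by (simp add: block_mat_def)

lemma sum_if_const: "(\<Sum>b\<in>A. if P then f b else 0) = (if P then (\<Sum>b\<in>A. f b) else 0)"
  by (cases P) simp_all

lemma sum_if_atLeastLessThan:
  fixes K L n :: nat
  assumes "K + L \<le> n"
  shows "(\<Sum>c<n. if K \<le> c \<and> c < K + L then g c else 0) = (\<Sum>c\<in>{K..<K+L}. g c)"
proof -
  have "(\<Sum>c<n. if K \<le> c \<and> c < K + L then g c else 0) = sum g {c \<in> {..<n}. K \<le> c \<and> c < K + L}"
    by (rule sum.inter_filter[symmetric]) simp
  also have "{c \<in> {..<n}. K \<le> c \<and> c < K + L} = {K..<K+L}" using assms by auto
  finally show ?thesis .
qed

lemma block_mat_mult:
  assumes n: "K + L \<le> n"
  shows "block_mat n K L x y * block_mat n K L x' y' =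
    block_mat n K L (x * x') (x * y' + y * x' + of_nat L * y * y')" (is "?M = block_mat n K L ?u ?v")
proof (rule eq_matI)
  fix a b assume "a < dim_row (block_mat n K L ?u ?v)" "b < dim_col (block_mat n K L ?u ?v)"
  then have ab: "a < n" "b < n" by auto
  have "?M $$ (a,b) = (\<Sum>c<n. block_mat n K L x y $$ (a,c) * block_mat n K L x' y' $$ (c,b))"
    using index_mult_mat_sum[OF block_mat_carrier block_mat_carrier ab] .
  also have "\<dots> = block_mat n K L ?u ?v $$ (a,b)"
  proof (cases "K \<le> a \<and> a < K + L \<and> K \<le> b \<and> b < K + L")
    case True
    have "(\<Sum>c<n. block_mat n K L x y $$ (a,c) * block_mat n K L x' y' $$ (c,b)) =
        (\<Sum>c<n. if K \<le> c \<and> c < K + L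
          then ((if a = c then x else 0) + y) * ((if c = b then x' else 0) + y') else 0)"
      using True ab by (intro sum.cong refl) (auto simp: index_block_mat)
    also have "\<dots> = (\<Sum>c\<in>{K..<K+L}. ((if a = c then x else 0) + y) * ((if c = b then x' else 0) + y'))"
      by (rule sum_if_atLeastLessThan[OF n])
    also have "\<dots> = (\<Sum>c\<in>{K..<K+L}.
        (if c = a then (if a = b then x * x' else 0) + x * y' else 0) + (if c = b then y * x' else 0) + y * y')"
      by (intro sum.cong refl) (auto simp: algebra_simps)
    also have "\<dots> = block_mat n K L ?u ?v $$ (a,b)"
      using True ab by (simp add: sum.distrib index_block_mat algebra_simps)
    finally show ?thesis .
  qed (use ab in \<open>auto simp: index_block_mat intro!: sum.neutral\<close>)
  finally show "?M $$ (a,b) = block_mat n K L ?u ?v $$ (a,b)" .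
qed auto

lemma adj_block_mat: "adj (block_mat n K L x y) = block_mat n K L (cnj x) (cnj y)"
  by (rule eq_matI) (auto simp: adj_def index_block_mat)

lemma block_mat_one_cong: "x + y = x' + y' \<Longrightarrow> block_mat n K 1 x y = block_mat n K 1 x' y'"
  by (rule eq_matI) (auto simp: index_block_mat)

lemma tr_block_mat:
  assumes "K + L \<le> n"
  shows "tr (block_mat n K L x y) = of_nat L * (x + y)"
proof -
  have "tr (block_mat n K L x y) = (\<Sum>a<n. if K \<le> a \<and> a < K + L then x + y else 0)"
    unfolding tr_def by (intro sum.cong refl) (auto simp: index_block_mat)
  also have "\<dots> = (\<Sum>a\<in>{K..<K+L}. x + y)" by (rule sum_if_atLeastLessThan[OF assms])
  finally show ?thesis by simp
qed

lemma quad_form_block_mat: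
  assumes n: "K + L \<le> n"
  shows "quad_form n (block_mat n K L x y) v =
    x * (\<Sum>a\<in>{K..<K+L}. cnj (v a) * v a) + y * (cnj (\<Sum>a\<in>{K..<K+L}. v a) * (\<Sum>a\<in>{K..<K+L}. v a))"
proof -
  let ?f = "\<lambda>a b. cnj (v a) * ((if a = b then x else 0) + y) * v b"
  have "quad_form n (block_mat n K L x y) v =
      (\<Sum>a<n. if K \<le> a \<and> a < K + L then \<Sum>b<n. if K \<le> b \<and> b < K + L then ?f a b else 0 else 0)"
    unfolding quad_form_def sum_if_const[symmetric]
    by (intro sum.cong refl) (auto simp: index_block_mat)
  also have "\<dots> = (\<Sum>a\<in>{K..<K+L}. \<Sum>b\<in>{K..<K+L}. ?f a b)"
    unfolding sum_if_atLeastLessThan[OF n] ..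
  also have "\<dots> = (\<Sum>a\<in>{K..<K+L}. \<Sum>b\<in>{K..<K+L}.
      (if b = a then x * (cnj (v a) * v a) else 0) + y * (cnj (v a) * v b))"
    by (intro sum.cong refl) (auto simp: algebra_simps)
  finally show ?thesis
    by (simp add: sum.distrib sum_distrib_left sum_distrib_right cnj_sum algebra_simps)
qed

lemma psd_block_mat:
  assumes n: "K + L \<le> n" and x: "x \<ge> 0" and y: "y \<ge> 0"
  shows "psd (block_mat n K L (of_real x) (of_real y))"
proof -
  have "hermitian_mat n (block_mat n K L (of_real x) (of_real y))"
    unfolding hermitian_mat_def by (auto simp: index_block_mat)
  moreover have "0 \<le> Re (quad_form n (block_mat n K L (of_real x) (of_real y)) v)" for v
  proof -
    have "cnj (\<Sum>a\<in>{K..<K+L}. v a) * (\<Sum>a\<in>{K..<K+L}. v a) = of_real ((cmod (\<Sum>a\<in>{K..<K+L}. v a))^2)"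
      using sum_cnj_mult_self[of "\<lambda>_. \<Sum>a\<in>{K..<K+L}. v a" "{()}"] by simp
    then have "Re (quad_form n (block_mat n K L (of_real x) (of_real y)) v) =
        x * (\<Sum>a\<in>{K..<K+L}. (cmod (v a))^2) + y * (cmod (\<Sum>a\<in>{K..<K+L}. v a))^2"
      unfolding quad_form_block_mat[OF n] sum_cnj_mult_self by simp
    also have "\<dots> \<ge> 0" using x y by (intro add_nonneg_nonneg mult_nonneg_nonneg sum_nonneg) auto
    finally show ?thesis .
  qed
  ultimately show ?thesis using psd_iff_quad_form[OF block_mat_carrier] by blast
qed

lemma trace_norm_block_mat:
  assumes n: "K + L \<le> n" and L: "L > 0" and x: "x \<ge> 0"
  shows "trace_norm (block_mat n K L (of_real x) (of_real (- x))) = 2 * (real L - 1) * x"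
proof -
  let ?A = "block_mat n K L (of_real x) (of_real (- x))"
  define y where "y = x * (real L - 2) / real L"
  have y: "2 * x * y + real L * y * y = (real L - 2) * (x * x)"
    unfolding y_def using L by (simp add: field_simps power2_eq_square)
  have root: "block_mat n K L (of_real x) (of_real y) * block_mat n K L (of_real x) (of_real y) = adj ?A * ?A"
  proof -
    have "block_mat n K L (of_real x) (of_real y) * block_mat n K L (of_real x) (of_real y)
        = block_mat n K L (of_real (x * x)) (of_real (2 * x * y + real L * y * y))"
      unfolding block_mat_mult[OF n] by (simp add: algebra_simps)
    also have "\<dots> = block_mat n K L (of_real (x * x)) (of_real ((real L - 2) * (x * x)))"
      unfolding y ..
    also have "\<dots> = adj ?A * ?A"
      unfolding adj_block_mat block_mat_mult[OF n] by (simp add: algebra_simps)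
    finally show ?thesis .
  qed
  show ?thesis
  proof (cases "L = 1")
    case True
    have "block_mat n K L (of_real x) (of_real y) = block_mat n K L (of_real 0) (of_real 0)"
      unfolding True by (rule block_mat_one_cong) (simp add: y_def True)
    then have "trace_norm ?A = Re (tr (block_mat n K L (of_real 0) (of_real 0)))"
      using root by (intro trace_norm_eqI[OF block_mat_carrier block_mat_carrier psd_block_mat[OF n]]) simp_all
    then show ?thesis using tr_block_mat[OF n, of "of_real 0" "of_real 0"] True by simp
  next
    case False
    then have "y \<ge> 0" unfolding y_def using L x by simp
    have "trace_norm ?A = Re (tr (block_mat n K L (of_real x) (of_real y)))"
      by (rule trace_norm_eqI[OF block_mat_carrier block_mat_carrier psd_block_mat[OF n x \<open>y \<ge> 0\<close>] root])
    also have "\<dots> = real L * (x + y)" by (simp add: tr_block_mat[OF n])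
    also have "\<dots> = 2 * (real L - 1) * x" unfolding y_def using L by (simp add: field_simps)
    finally show ?thesis .
  qed
qed

section \<open>Channels with sparse Kraus operators\<close>

text \<open>\<open>sparse_kraus n' J g c\<close> is the map \<open>X \<mapsto> \<Sum>\<^sub>j\<^sub>\<in>\<^sub>J K\<^sub>j X K\<^sub>j\<^sup>*\<close> with
  Kraus operators \<open>K\<^sub>j = \<Sum>\<^sub>a c j a |a\<rangle>\<langle>g j a|\<close>, each having at most one nonzero entry per row.\<close>

definition sparse_kraus ::
  "nat \<Rightarrow> 'j set \<Rightarrow> ('j \<Rightarrow> nat \<Rightarrow> nat) \<Rightarrow> ('j \<Rightarrow> nat \<Rightarrow> complex) \<Rightarrow> complex mat \<Rightarrow> complex mat" where
  "sparse_kraus n' J g c X = mat n' n' (\<lambda>(a,b). \<Sum>j\<in>J. c j a * cnj (c j b) * X $$ (g j a, g j b))"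

lemma sparse_kraus_carrier[simp]: "sparse_kraus n' J g c X \<in> carrier_mat n' n'"
  by (simp add: sparse_kraus_def)

lemma sparse_kraus_dim[simp]: "dim_row (sparse_kraus n' J g c X) = n'" "dim_col (sparse_kraus n' J g c X) = n'"
  by (simp_all add: sparse_kraus_def)

lemma index_sparse_kraus:
  "a < n' \<Longrightarrow> b < n' \<Longrightarrow> sparse_kraus n' J g c X $$ (a,b) = (\<Sum>j\<in>J. c j a * cnj (c j b) * X $$ (g j a, g j b))"
  by (simp add: sparse_kraus_def)

lemma lin_map_sparse_kraus:
  assumes gb: "\<forall>j\<in>J. \<forall>a<n'. g j a < d"
  shows "lin_map d n' (sparse_kraus n' J g c)"
  unfolding lin_map_def
proof (intro conjI ballI allI)
  fix A B :: "complex mat" assume "A \<in> carrier_mat d d" "B \<in> carrier_mat d d"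
  then show "sparse_kraus n' J g c (A + B) = sparse_kraus n' J g c A + sparse_kraus n' J g c B"
    using gb by (intro eq_matI)
      (auto simp: index_sparse_kraus sum.distrib[symmetric] distrib_left sparse_kraus_def intro!: sum.cong)
next
  fix A :: "complex mat" and z :: complex assume "A \<in> carrier_mat d d"
  then show "sparse_kraus n' J g c (z \<cdot>\<^sub>m A) = z \<cdot>\<^sub>m sparse_kraus n' J g c A"
    using gb by (intro eq_matI)
      (auto simp: index_sparse_kraus sum_distrib_left algebra_simps sparse_kraus_def intro!: sum.cong)
qed (simp add: sparse_kraus_def)

lemma trace_preserving_sparse_kraus:
  assumes fin: "finite J" and gb: "\<forall>j\<in>J. \<forall>a<n'. g j a < d"
    and comp: "\<forall>x<d. (\<Sum>j\<in>J. \<Sum>a<n'. if g j a = x then c j a * cnj (c j a) else 0) = 1"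
  shows "trace_preserving d (sparse_kraus n' J g c)"
  unfolding trace_preserving_def
proof
  fix A :: "complex mat" assume A: "A \<in> carrier_mat d d"
  have "tr A = (\<Sum>x<d. A $$ (x,x) * (\<Sum>j\<in>J. \<Sum>a<n'. if g j a = x then c j a * cnj (c j a) else 0))"
    using A comp by (simp add: tr_def)
  also have "\<dots> = (\<Sum>x<d. \<Sum>j\<in>J. \<Sum>a<n'. if g j a = x then c j a * cnj (c j a) * A $$ (g j a, g j a) else 0)"
    by (intro sum.cong refl) (simp add: sum_distrib_left if_distrib mult.commute cong: if_cong)
  also have "\<dots> = (\<Sum>j\<in>J. \<Sum>x<d. \<Sum>a<n'. if g j a = x then c j a * cnj (c j a) * A $$ (g j a, g j a) else 0)"
    by (rule sum.swap)
  also have "\<dots> = (\<Sum>j\<in>J. \<Sum>a<n'. \<Sum>x<d. if g j a = x then c j a * cnj (c j a) * A $$ (g j a, g j a) else 0)"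
    by (rule sum.cong[OF refl]) (rule sum.swap)
  also have "\<dots> = (\<Sum>j\<in>J. \<Sum>a<n'. c j a * cnj (c j a) * A $$ (g j a, g j a))"
    using gb by (intro sum.cong refl) (simp add: sum.delta')
  also have "\<dots> = (\<Sum>a<n'. \<Sum>j\<in>J. c j a * cnj (c j a) * A $$ (g j a, g j a))"
    by (rule sum.swap)
  also have "\<dots> = tr (sparse_kraus n' J g c A)"
    by (simp add: tr_def index_sparse_kraus)
  finally show "tr (sparse_kraus n' J g c A) = tr A" by simp
qed

lemma sum_indicator_collapse:
  fixes N P :: nat and a :: "nat \<Rightarrow> complex"
  assumes "\<forall>q<P. f q < N"
  shows "(\<Sum>s<N. (\<Sum>q<P. if f q = s then a q else 0) * h s) = (\<Sum>q<P. a q * h (f q))"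
proof -
  have "(\<Sum>s<N. (\<Sum>q<P. if f q = s then a q else 0) * h s) = (\<Sum>s<N. \<Sum>q<P. if f q = s then a q * h s else 0)"
    unfolding sum_distrib_right by (intro sum.cong refl) simp
  also have "\<dots> = (\<Sum>q<P. \<Sum>s<N. if f q = s then a q * h s else 0)" by (rule sum.swap)
  also have "\<dots> = (\<Sum>q<P. a q * h (f q))" using assms by (intro sum.cong refl) (simp add: sum.delta')
  finally show ?thesis .
qed

lemma quad_form_pullback:
  fixes N P :: nat and a :: "nat \<Rightarrow> complex"
  assumes fb: "\<forall>p<P. f p < N"
  shows "quad_form N X (\<lambda>r. \<Sum>p<P. if f p = r then a p else 0) = (\<Sum>p<P. \<Sum>q<P. cnj (a p) * X $$ (f p, f q) * a q)"
proof -
  have inner: "(\<Sum>s<N. X $$ (r,s) * (\<Sum>q<P. if f q = s then a q else 0)) = (\<Sum>q<P. X $$ (r, f q) * a q)" for r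
    using sum_indicator_collapse[OF fb, of a "\<lambda>s. X $$ (r,s)"] by (simp add: mult.commute)
  have "quad_form N X (\<lambda>r. \<Sum>p<P. if f p = r then a p else 0) =
      (\<Sum>r<N. (\<Sum>p<P. if f p = r then cnj (a p) else 0) * (\<Sum>q<P. X $$ (r, f q) * a q))"
    unfolding quad_form_def
  proof (intro sum.cong refl)
    fix r assume "r \<in> {..<N}"
    have "(\<Sum>s<N. cnj (\<Sum>p<P. if f p = r then a p else 0) * X $$ (r,s) * (\<Sum>q<P. if f q = s then a q else 0))
       = cnj (\<Sum>p<P. if f p = r then a p else 0) * (\<Sum>s<N. X $$ (r,s) * (\<Sum>q<P. if f q = s then a q else 0))"
      by (simp add: sum_distrib_left mult.assoc)
    also have "\<dots> = (\<Sum>p<P. if f p = r then cnj (a p) else 0) * (\<Sum>q<P. X $$ (r, f q) * a q)"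
      unfolding inner by (simp add: cnj_sum if_distrib cong: if_cong)
    finally show "(\<Sum>s<N. cnj (\<Sum>p<P. if f p = r then a p else 0) * X $$ (r,s) * (\<Sum>q<P. if f q = s then a q else 0))
       = (\<Sum>p<P. if f p = r then cnj (a p) else 0) * (\<Sum>q<P. X $$ (r, f q) * a q)" .
  qed
  also have "\<dots> = (\<Sum>p<P. cnj (a p) * (\<Sum>q<P. X $$ (f p, f q) * a q))"
    by (rule sum_indicator_collapse[OF fb])
  also have "\<dots> = (\<Sum>p<P. \<Sum>q<P. cnj (a p) * X $$ (f p, f q) * a q)"
    by (simp add: sum_distrib_left mult.assoc)
  finally show ?thesis .
qed

lemma psd_sparse_kraus:
  assumes gb: "\<forall>j\<in>J. \<forall>a<n'. g j a < d"
    and X: "X \<in> carrier_mat d d" and pX: "psd X"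
  shows "psd (sparse_kraus n' J g c X)"
proof -
  have hX: "hermitian_mat d X" and qX: "\<forall>v. 0 \<le> Re (quad_form d X v)"
    using pX psd_iff_quad_form[OF X] by auto
  define M where "M = sparse_kraus n' J g c X"
  have hM: "hermitian_mat n' M" unfolding hermitian_mat_def
  proof (intro allI impI)
    fix a b assume ab: "a < n'" "b < n'"
    have "M $$ (b,a) = (\<Sum>j\<in>J. cnj (c j a * cnj (c j b) * X $$ (g j a, g j b)))"
      unfolding M_def index_sparse_kraus[OF ab(2) ab(1)]
    proof (intro sum.cong refl)
      fix j assume j: "j \<in> J"
      have "X $$ (g j b, g j a) = cnj (X $$ (g j a, g j b))"
        using hermitian_matD[OF hX] gb j ab by blast
      then show "c j b * cnj (c j a) * X $$ (g j b, g j a) = cnj (c j a * cnj (c j b) * X $$ (g j a, g j b))"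
        by simp
    qed
    also have "\<dots> = cnj (M $$ (a,b))" unfolding M_def index_sparse_kraus[OF ab] by (simp add: cnj_sum)
    finally show "M $$ (b,a) = cnj (M $$ (a,b))" .
  qed
  have qM: "0 \<le> Re (quad_form n' M w)" for w
  proof -
    define u where "u j x = (\<Sum>b<n'. if g j b = x then cnj (c j b) * w b else 0)" for j x
    have "quad_form n' M w = (\<Sum>a<n'. \<Sum>b<n'. \<Sum>j\<in>J. cnj (w a) * (c j a * cnj (c j b) * X $$ (g j a, g j b)) * w b)"
      unfolding quad_form_def M_def
      by (intro sum.cong refl) (simp add: index_sparse_kraus sum_distrib_left sum_distrib_right)
    also have "\<dots> = (\<Sum>j\<in>J. \<Sum>a<n'. \<Sum>b<n'. cnj (w a) * (c j a * cnj (c j b) * X $$ (g j a, g j b)) * w b)"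
      by (subst sum.swap, rule sum.cong[OF refl], rule sum.swap)
    also have "\<dots> = (\<Sum>j\<in>J. quad_form d X (u j))"
    proof (intro sum.cong refl)
      fix j assume "j \<in> J"
      then have fb: "\<forall>a<n'. g j a < d" using gb by blast
      show "(\<Sum>a<n'. \<Sum>b<n'. cnj (w a) * (c j a * cnj (c j b) * X $$ (g j a, g j b)) * w b) = quad_form d X (u j)"
        unfolding u_def quad_form_pullback[OF fb] by (intro sum.cong refl) (simp add: algebra_simps)
    qed
    finally have "Re (quad_form n' M w) = (\<Sum>j\<in>J. Re (quad_form d X (u j)))" by simp
    also have "\<dots> \<ge> 0" using qX by (intro sum_nonneg) auto
    finally show ?thesis .
  qed
  show ?thesis
    using psd_iff_quad_form[OF sparse_kraus_carrier, of n' J g c X] hM qM unfolding M_def by blast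
qed

lemma ampliate_sparse_kraus:
  assumes gb: "\<forall>j\<in>J. \<forall>a<n'. g j a < d"
  shows "ampliate d n' n (sparse_kraus n' J g c) X =
    sparse_kraus (n * n') J (\<lambda>j p. p div n' * d + g j (p mod n')) (\<lambda>j p. c j (p mod n')) X"
proof (rule eq_matI)
  fix p q assume "p < dim_row (sparse_kraus (n * n') J (\<lambda>j p. p div n' * d + g j (p mod n')) (\<lambda>j p. c j (p mod n')) X)"
    "q < dim_col (sparse_kraus (n * n') J (\<lambda>j p. p div n' * d + g j (p mod n')) (\<lambda>j p. c j (p mod n')) X)"
  then have pq: "p < n * n'" "q < n * n'" by auto
  then have "n' > 0" by (cases "n' = 0") auto
  then have "p mod n' < n'" "q mod n' < n'" by auto
  then show "ampliate d n' n (sparse_kraus n' J g c) X $$ (p,q) =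
    sparse_kraus (n * n') J (\<lambda>j p. p div n' * d + g j (p mod n')) (\<lambda>j p. c j (p mod n')) X $$ (p,q)"
    using pq gb by (simp add: ampliate_def index_sparse_kraus)
qed (simp_all add: ampliate_def)

lemma completely_positive_sparse_kraus:
  assumes gb: "\<forall>j\<in>J. \<forall>a<n'. g j a < d"
  shows "completely_positive d n' (sparse_kraus n' J g c)"
  unfolding completely_positive_def
proof (intro allI impI)
  fix n X assume X: "X \<in> carrier_mat (n * d) (n * d)" and "psd X"
  have bound: "\<forall>j\<in>J. \<forall>p<n * n'. p div n' * d + g j (p mod n') < n * d"
  proof (intro ballI allI impI)
    fix j p assume j: "j \<in> J" and p: "p < n * n'"
    then have "n' > 0" by (cases "n' = 0") auto
    then have "g j (p mod n') < d" using gb j by simp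
    moreover have "p div n' + 1 \<le> n" using p less_mult_imp_div_less[of p n n'] by simp
    then have "(p div n' + 1) * d \<le> n * d" by (rule mult_right_mono) simp
    ultimately show "p div n' * d + g j (p mod n') < n * d" by (simp add: algebra_simps)
  qed
  show "psd (ampliate d n' n (sparse_kraus n' J g c) X)"
    unfolding ampliate_sparse_kraus[OF gb]
    by (rule psd_sparse_kraus[OF _ X \<open>psd X\<close>]) (use bound in blast)
qed

lemma index_evol:
  assumes "dim_row H = d" "i < d" "j < d"
  shows "evol H t $$ (i,j) = (if i = j then exp (- \<i> * complex_of_real t * H $$ (i, i)) else 0)"
  using assms by (simp add: evol_def)

lemma index_evol_conj:
  assumes dH: "dim_row H = d" and rho: "\<rho> \<in> carrier_mat d d" and ij: "i < d" "j < d"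
  shows "(evol H t * \<rho> * adj (evol H t)) $$ (i,j) =
    exp (- \<i> * of_real t * H $$ (i,i)) * \<rho> $$ (i,j) * cnj (exp (- \<i> * of_real t * H $$ (j,j)))"
proof -
  define u where "u k = exp (- \<i> * of_real t * H $$ (k,k))" for k
  have U: "evol H t \<in> carrier_mat d d" using dH by (simp add: evol_def)
  then have adj_carrier: "adj (evol H t) \<in> carrier_mat d d" by (simp add: adj_def)
  have left: "(evol H t * \<rho>) $$ (k,j) = u k * \<rho> $$ (k,j)" if "k < d" for k
  proof -
    have "(evol H t * \<rho>) $$ (k,j) = (\<Sum>l<d. if l = k then u k * \<rho> $$ (k,j) else 0)"
      unfolding index_mult_mat_sum[OF U rho that ij(2)]
      using that dH by (intro sum.cong refl) (auto simp: index_evol u_def)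
    then show ?thesis using that by simp
  qed
  have "(evol H t * \<rho> * adj (evol H t)) $$ (i,j) =
      (\<Sum>k<d. if k = j then (evol H t * \<rho>) $$ (i,j) * cnj (u j) else 0)"
    unfolding index_mult_mat_sum[OF mult_carrier_mat[OF U rho] adj_carrier ij]
    using U ij dH by (intro sum.cong refl) (auto simp: adj_def index_evol u_def)
  then show ?thesis using ij left[OF ij(1)] by (simp add: u_def)
qed

lemma exp_phase_mult_cnj_eq:
  fixes t x y x' y' :: real
  assumes "x - y = x' - y'"
  shows "exp (- \<i> * of_real t * of_real x) * cnj (exp (- \<i> * of_real t * of_real y))
       = exp (- \<i> * of_real t * of_real x') * cnj (exp (- \<i> * of_real t * of_real y'))"
proof -
  have e: "exp (- \<i> * complex_of_real t * complex_of_real z) = cis (- (t * z))" for z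
    by (simp add: cis_conv_exp algebra_simps)
  have "t * (x - y) = t * (x' - y')" using assms by simp
  then have "- (t * x) + t * y = - (t * x') + t * y'" by (simp add: algebra_simps)
  then show ?thesis unfolding e by (simp add: cis_cnj cis_mult)
qed

lemma sparse_kraus_covariant:
  assumes gb: "\<forall>j\<in>J. \<forall>a<n'. g j a < d"
    and dH: "dim_row H = d" and dH': "dim_row H' = n'"
    and EH: "\<forall>x<d. H $$ (x,x) = complex_of_real (E x)"
    and EH': "\<forall>a<n'. H' $$ (a,a) = complex_of_real (E' a)"
    and cov: "\<forall>j\<in>J. \<forall>a<n'. \<forall>b<n'. c j a \<noteq> 0 \<longrightarrow> c j b \<noteq> 0 \<longrightarrow>
      E (g j a) - E (g j b) = E' a - E' b"
  shows "\<forall>t::real. \<forall>\<rho> \<in> carrier_mat d d. sparse_kraus n' J g c (evol H t * \<rho> * adj (evol H t)) =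
    evol H' t * sparse_kraus n' J g c \<rho> * adj (evol H' t)"
proof (intro allI ballI)
  fix t :: real and \<rho> :: "complex mat" assume rho: "\<rho> \<in> carrier_mat d d"
  define ph where "ph x = exp (- \<i> * complex_of_real t * complex_of_real x)" for x
  show "sparse_kraus n' J g c (evol H t * \<rho> * adj (evol H t)) =
    evol H' t * sparse_kraus n' J g c \<rho> * adj (evol H' t)" (is "?lhs = ?rhs")
  proof (rule eq_matI)
    fix a b assume "a < dim_row ?rhs" "b < dim_col ?rhs"
    then have ab: "a < n'" "b < n'" using dH' by (auto simp: evol_def adj_def)
    have "?lhs $$ (a,b) =
        (\<Sum>j\<in>J. c j a * cnj (c j b) * (ph (E (g j a)) * \<rho> $$ (g j a, g j b) * cnj (ph (E (g j b)))))"
      unfolding index_sparse_kraus[OF ab]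
      using index_evol_conj[OF dH rho] EH gb ab unfolding ph_def by (intro sum.cong refl) simp
    also have "\<dots> = (\<Sum>j\<in>J. ph (E' a) * (c j a * cnj (c j b) * \<rho> $$ (g j a, g j b)) * cnj (ph (E' b)))"
    proof (intro sum.cong refl)
      fix j assume j: "j \<in> J"
      show "c j a * cnj (c j b) * (ph (E (g j a)) * \<rho> $$ (g j a, g j b) * cnj (ph (E (g j b)))) =
        ph (E' a) * (c j a * cnj (c j b) * \<rho> $$ (g j a, g j b)) * cnj (ph (E' b))"
      proof (cases "c j a = 0 \<or> c j b = 0")
        case False
        then have "ph (E (g j a)) * cnj (ph (E (g j b))) = ph (E' a) * cnj (ph (E' b))"
          using cov j ab unfolding ph_def by (intro exp_phase_mult_cnj_eq) auto
        then show ?thesis by (simp add: algebra_simps)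
      qed auto
    qed
    also have "\<dots> = ?rhs $$ (a,b)"
      using index_evol_conj[OF dH' sparse_kraus_carrier ab, of t J g c \<rho>] EH' ab
      unfolding ph_def index_sparse_kraus[OF ab] by (simp add: sum_distrib_left sum_distrib_right)
    finally show "?lhs $$ (a,b) = ?rhs $$ (a,b)" .
  qed (use dH' in \<open>simp_all add: evol_def adj_def\<close>)
qed

lemma covariant_channel_sparse_kraus:
  assumes fin: "finite J" and gb: "\<forall>j\<in>J. \<forall>a<n'. g j a < d"
    and comp: "\<forall>x<d. (\<Sum>j\<in>J. \<Sum>a<n'. if g j a = x then c j a * cnj (c j a) else 0) = 1"
    and dH: "dim_row H = d" and dH': "dim_row H' = n'"
    and EH: "\<forall>x<d. H $$ (x,x) = complex_of_real (E x)"
    and EH': "\<forall>a<n'. H' $$ (a,a) = complex_of_real (E' a)"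
    and cov: "\<forall>j\<in>J. \<forall>a<n'. \<forall>b<n'. c j a \<noteq> 0 \<longrightarrow> c j b \<noteq> 0 \<longrightarrow>
      E (g j a) - E (g j b) = E' a - E' b"
  shows "covariant_channel H H' (sparse_kraus n' J g c)"
  unfolding covariant_channel_def channel_def dH dH'
  using lin_map_sparse_kraus[OF gb] completely_positive_sparse_kraus[OF gb] trace_preserving_sparse_kraus[OF fin gb comp]
    sparse_kraus_covariant[OF gb dH dH' EH EH' cov] dH by simp

section \<open>Estimates for binomial coefficients\<close>

lemma sum_lessThan_add: "(\<Sum>n<a+b. f n) = (\<Sum>n<a. f n) + (\<Sum>k<b. f (a+k::nat))"
  by (induction b) (simp_all add: add.assoc)

lemma sum_lessThan_mult_blocks: "(\<Sum>n<Q*L. f n) = (\<Sum>q<Q. \<Sum>k<L. f (q*L + k :: nat))"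
proof -
  have "sum f {q*L..<q*L+L} = (\<Sum>k<L. f (q*L + k))" for q
    using sum.shift_bounds_nat_ivl[of f 0 "q*L" L] by (simp add: atLeast0LessThan add.commute)
  then show ?thesis by (simp add: sum.nat_group[symmetric])
qed

lemma sum_choose_lessThan:
  assumes "m < M"
  shows "(\<Sum>n<M. m choose n) = 2^m"
proof -
  have "(\<Sum>n<M. m choose n) = (\<Sum>n\<le>m. m choose n)"
    using assms by (intro sum.mono_neutral_right) auto
  then show ?thesis by (simp add: choose_row_sum)
qed

lemma abs_diff_le_sum_abs_steps:
  fixes f :: "nat \<Rightarrow> real"
  shows "\<bar>f (s+k) - f s\<bar> \<le> (\<Sum>i<k. \<bar>f (s+i+1) - f (s+i)\<bar>)"
proof (induction k)
  case 0 then show ?case by simp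
next
  case (Suc k)
  have "\<bar>f (s + Suc k) - f s\<bar> \<le> \<bar>f (s+k+1) - f (s+k)\<bar> + \<bar>f (s+k) - f s\<bar>" by simp
  also have "\<dots> \<le> \<bar>f (s+k+1) - f (s+k)\<bar> + (\<Sum>i<k. \<bar>f (s+i+1) - f (s+i)\<bar>)" using Suc.IH by simp
  finally show ?case by (simp add: add.commute)
qed

lemma diff_le_twice_sum_abs_steps:
  fixes f :: "nat \<Rightarrow> real"
  assumes "k < L" "k' < L"
  shows "f (s+k) - f (s+k') \<le> 2 * (\<Sum>i<L. \<bar>f (s+i+1) - f (s+i)\<bar>)"
proof -
  have m: "(\<Sum>i<k. \<bar>f (s+i+1) - f (s+i)\<bar>) \<le> (\<Sum>i<L. \<bar>f (s+i+1) - f (s+i)\<bar>)"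
    if "k < L" for k using that by (intro sum_mono2) auto
  have "f (s+k) - f (s+k') \<le> \<bar>f (s+k) - f s\<bar> + \<bar>f (s+k') - f s\<bar>" by simp
  also have "\<dots> \<le> (\<Sum>i<k. \<bar>f (s+i+1) - f (s+i)\<bar>) + (\<Sum>i<k'. \<bar>f (s+i+1) - f (s+i)\<bar>)"
    using abs_diff_le_sum_abs_steps[of f s k] abs_diff_le_sum_abs_steps[of f s k'] by simp
  also have "\<dots> \<le> 2 * (\<Sum>i<L. \<bar>f (s+i+1) - f (s+i)\<bar>)" using m[OF assms(1)] m[OF assms(2)] by simp
  finally show ?thesis .
qed

lemma sum_abs_binomial_steps_le:
  "(\<Sum>i<M. \<bar>real (m choose (i+1)) - real (m choose i)\<bar>) \<le> 2 * real (m choose (m div 2))"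
proof -
  define f where "f i = real (m choose i)" for i
  define h where "h = m div 2"
  have up: "f i \<le> f (i+1)" if "i < h" for i
    unfolding f_def using binomial_mono[of i "i+1" m] that h_def by simp
  have down: "f (i+1) \<le> f i" if "h \<le> i" for i
  proof (cases "i + 1 \<le> m")
    case True then show ?thesis unfolding f_def using binomial_antimono[of i "i+1" m] that h_def by simp
  next
    case False then show ?thesis unfolding f_def by (simp add: binomial_eq_0)
  qed
  have "(\<Sum>i<M. \<bar>f (i+1) - f i\<bar>) \<le> (\<Sum>i<h+M. \<bar>f (i+1) - f i\<bar>)"
    by (intro sum_mono2) auto
  also have "\<dots> = (\<Sum>i<h. \<bar>f (i+1) - f i\<bar>) + (\<Sum>k<M. \<bar>f (h+k+1) - f (h+k)\<bar>)"
    by (rule sum_lessThan_add)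
  also have "(\<Sum>i<h. \<bar>f (i+1) - f i\<bar>) = (\<Sum>i<h. f (Suc i) - f i)"
    using up by (intro sum.cong refl) auto
  also have "\<dots> = f h - f 0" by (rule sum_lessThan_telescope)
  also have "(\<Sum>k<M. \<bar>f (h+k+1) - f (h+k)\<bar>) = (\<Sum>k<M. f (h+k) - f (h + Suc k))"
    using down by (intro sum.cong refl) auto
  also have "\<dots> = f (h+0) - f (h+M)" by (rule sum_lessThan_telescope'[where f="\<lambda>k. f (h+k)"])
  also have "f h - f 0 + (f (h+0) - f (h+M)) \<le> 2 * f h"
    unfolding f_def by simp
  finally show ?thesis unfolding f_def h_def by simp
qed

lemma central_binomial_Suc: "(N+1) * ((2*N+2) choose (N+1)) = 2 * (2*N+1) * ((2*N) choose N)"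
proof -
  have "(N+1) * ((2*N+2) choose (N+1)) = 2 * ((N+1) * ((2*N+1) choose N))"
    using Suc_times_binomial[of N "2*N+1"] by (simp del: binomial_Suc_Suc add: algebra_simps)
  moreover have "(N+1) * ((2*N+1) choose N) = (2*N+1) * ((2*N) choose N)"
    using Suc_times_binomial[of N "2*N"] binomial_symmetric[of N "2*N+1"]
    by (simp del: binomial_Suc_Suc)
  ultimately show ?thesis by simp
qed

lemma central_binomial_sq_le: "real ((2*N) choose N)^2 * (2*N+1) \<le> 16^N"
proof (induction N)
  case (Suc N)
  define c where "c = real ((2*N) choose N)"
  define c' where "c' = real ((2*N+2) choose (N+1))"
  have rec: "(real N + 1) * c' = 2 * (2 * real N + 1) * c"
    using arg_cong[OF central_binomial_Suc[of N], of real] unfolding c_def c'_def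
    by (simp del: binomial_Suc_Suc add: algebra_simps)
  have "(real N + 1)^2 * (c'^2 * (2 * real N + 3)) = ((real N + 1) * c')^2 * (2 * real N + 3)"
    by (simp add: power_mult_distrib)
  also have "\<dots> = 4 * (2 * real N + 1) * (2 * real N + 3) * (c^2 * (2 * real N + 1))"
    unfolding rec by (simp add: power2_eq_square algebra_simps)
  also have "\<dots> \<le> 4 * (2 * real N + 1) * (2 * real N + 3) * 16^N"
    using Suc.IH unfolding c_def by (intro mult_left_mono) (simp_all add: add.commute)
  also have "\<dots> \<le> (real N + 1)^2 * 16^Suc N"
    by (simp add: power2_eq_square algebra_simps)
  finally have "(real N + 1)^2 * (c'^2 * (2 * real N + 3)) \<le> (real N + 1)^2 * 16^Suc N" .
  then have "c'^2 * (2 * real N + 3) \<le> 16^Suc N"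
    by (rule mult_left_le_imp_le) (simp add: add_pos_nonneg)
  then show ?case unfolding c'_def by (simp del: binomial_Suc_Suc add: algebra_simps)
qed simp

lemma central_binomial_sqrt_le: "real ((2*N) choose N) * sqrt (2*N+1) \<le> 4^N"
proof -
  have "(real ((2*N) choose N) * sqrt (2*N+1))^2 = real ((2*N) choose N)^2 * (2*N+1)"
    by (simp add: power_mult_distrib)
  also have "\<dots> \<le> (4^N)^2"
    using central_binomial_sq_le[of N] by (simp add: power2_eq_square power_mult_distrib[symmetric])
  finally show ?thesis by (rule power2_le_imp_le) simp
qed

section \<open>The systems \<open>T\<^sup>\<otimes>\<^sup>m\<close> and \<open>T'\<close>\<close>

lemma index_kron:
  assumes "A \<in> carrier_mat n1 m1" "B \<in> carrier_mat n2 m2" "p < n1 * n2" "q < m1 * m2"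
  shows "kron A B $$ (p,q) = A $$ (p div n2, q div m2) * B $$ (p mod n2, q mod m2)"
  using assms by (simp add: kron_def)

lemma tensor_pow_carrier:
  assumes "A \<in> carrier_mat d d"
  shows "tensor_pow A m \<in> carrier_mat (d^m) (d^m)"
  by (induction m) (use assms in \<open>auto simp: kron_def mult.commute\<close>)

lemma index_tensor_pow_const:
  assumes A: "A \<in> carrier_mat d d" and z: "\<And>i j. i < d \<Longrightarrow> j < d \<Longrightarrow> A $$ (i,j) = z"
  shows "x < d^m \<Longrightarrow> y < d^m \<Longrightarrow> tensor_pow A m $$ (x,y) = z^m"
proof (induction m arbitrary: x y)
  case 0
  then show ?case by simp
next
  case (Suc m)
  have xy: "x < d^m * d" "y < d^m * d" using Suc.prems by (simp_all add: mult.commute)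
  then have "d > 0" by (cases d) auto
  then have "x div d < d^m" "y div d < d^m" "x mod d < d" "y mod d < d"
    using xy by (simp_all add: div_less_iff_less_mult)
  with xy show ?case
    using index_kron[OF tensor_pow_carrier[OF A] A] Suc.IH z by simp
qed

lemma ham_pow_carrier:
  assumes "H \<in> carrier_mat d d"
  shows "ham_pow H m \<in> carrier_mat (d^m) (d^m)"
  by (induction m) (use assms in \<open>auto simp: kron_def mult.commute\<close>)

text \<open>The number of excitations of the basis state \<open>x\<close> of \<open>T\<^sup>\<otimes>\<^sup>m\<close>: by the index convention
  of \<^const>\<open>kron\<close>, the last tensor factor is the least significant binary digit of \<open>x\<close>.\<close>

fun bit_weight :: "nat \<Rightarrow> nat \<Rightarrow> nat" where
  "bit_weight 0 x = 0"
| "bit_weight (Suc m) x = bit_weight m (x div 2) + x mod 2"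

lemma bit_weight_le: "bit_weight m x \<le> m"
proof (induction m arbitrary: x)
  case (Suc m)
  have "x mod 2 \<le> 1" by simp
  then show ?case using Suc.IH[of "x div 2"] by simp
qed simp

lemma H_T_carrier: "H_T \<delta> \<in> carrier_mat 2 2"
  by (simp add: H_T_def)

lemma index_ham_pow_H_T:
  "x < 2^m \<Longrightarrow> ham_pow (H_T \<delta>) m $$ (x,x) = complex_of_real (\<delta> * real (bit_weight m x))"
proof (induction m arbitrary: x)
  case 0
  then show ?case by simp
next
  case (Suc m)
  have C: "ham_pow (H_T \<delta>) m \<in> carrier_mat (2^m) (2^m)"
    by (rule ham_pow_carrier[OF H_T_carrier])
  have x: "x < 2^m * 2" "x div 2 < 2^m" using Suc.prems by (auto simp: div_less_iff_less_mult)
  have "ham_pow (H_T \<delta>) (Suc m) $$ (x,x) =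
      kron (ham_pow (H_T \<delta>) m) (1\<^sub>m 2) $$ (x,x) + kron (1\<^sub>m (2^m)) (H_T \<delta>) $$ (x,x)"
    using C x by (simp add: kron_def H_T_def)
  also have "\<dots> = ham_pow (H_T \<delta>) m $$ (x div 2, x div 2) + (if x mod 2 = 1 then complex_of_real \<delta> else 0)"
    using index_kron[OF C one_carrier_mat x(1) x(1)] index_kron[OF one_carrier_mat H_T_carrier x(1) x(1)] x
    by (simp add: H_T_def)
  also have "\<dots> = complex_of_real (\<delta> * real (bit_weight (Suc m) x))"
    using Suc.IH[OF x(2)] by (cases "x mod 2 = 1") (auto simp: algebra_simps)
  finally show ?case .
qed

lemma inverse_sqrt_mult_cnj:
  assumes "r \<ge> 0"
  shows "complex_of_real (1 / sqrt r) * cnj (complex_of_real (1 / sqrt r)) = complex_of_real (1 / r)"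
  using assms by (simp flip: of_real_mult)

lemma index_proj: "i < dim_vec v \<Longrightarrow> j < dim_vec v \<Longrightarrow> proj v $$ (i,j) = v $ i * cnj (v $ j)"
  by (simp add: proj_def)

lemma tensor_pow_plus_state:
  "tensor_pow (proj plus_state) m \<in> carrier_mat (2^m) (2^m)"
  "x < 2^m \<Longrightarrow> y < 2^m \<Longrightarrow> tensor_pow (proj plus_state) m $$ (x,y) = (1/2)^m"
proof -
  have P: "proj plus_state \<in> carrier_mat 2 2" by (simp add: proj_def plus_state_def)
  show "tensor_pow (proj plus_state) m \<in> carrier_mat (2^m) (2^m)"
    by (rule tensor_pow_carrier[OF P])
  have "proj plus_state $$ (i,j) = 1/2" if "i < 2" "j < 2" for i j
    using that inverse_sqrt_mult_cnj[of 2] by (simp add: index_proj plus_state_def)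
  then show "x < 2^m \<Longrightarrow> y < 2^m \<Longrightarrow> tensor_pow (proj plus_state) m $$ (x,y) = (1/2)^m"
    by (rule index_tensor_pow_const[OF P])
qed

lemma H_T'_carrier: "H_T' \<delta> K \<in> carrier_mat (2*K+1) (2*K+1)"
  by (simp add: H_T'_def)

lemma index_H_T': "a < 2*K+1 \<Longrightarrow> H_T' \<delta> K $$ (a,a) = complex_of_real ((real a - real K) * \<delta>)"
  by (simp add: H_T'_def)

lemma proj_eta_state:
  "proj (eta_state K L) \<in> carrier_mat (2*K+1) (2*K+1)"
  "a < 2*K+1 \<Longrightarrow> b < 2*K+1 \<Longrightarrow> proj (eta_state K L) $$ (a,b) =
     (if K \<le> a \<and> a < K + L \<and> K \<le> b \<and> b < K + L then complex_of_real (1 / real L) else 0)"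
  using inverse_sqrt_mult_cnj[of "real L"] by (simp_all add: proj_def eta_state_def)

section \<open>Basis states of given weight\<close>

definition weight_level :: "nat \<Rightarrow> nat \<Rightarrow> nat set" where
  "weight_level m n = {x. x < 2^m \<and> bit_weight m x = n}"

lemma finite_weight_level[simp]: "finite (weight_level m n)"
  unfolding weight_level_def by simp

lemma weight_level_Suc:
  "weight_level (Suc m) n =
    (\<lambda>y. 2*y) ` weight_level m n \<union> (\<lambda>y. 2*y + 1) ` (if n = 0 then {} else weight_level m (n - 1))"
  (is "_ = ?even \<union> ?odd")
proof (intro Set.set_eqI iffI)
  fix x assume "x \<in> weight_level (Suc m) n"
  then have x: "x div 2 < 2^m" "bit_weight m (x div 2) + x mod 2 = n"
    unfolding weight_level_def by (auto simp: div_less_iff_less_mult)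
  show "x \<in> ?even \<union> ?odd"
  proof (cases "x mod 2 = 0")
    case True
    then have "x = 2 * (x div 2)" "x div 2 \<in> weight_level m n"
      using x unfolding weight_level_def by auto
    then show ?thesis by blast
  next
    case False
    then have "x = 2 * (x div 2) + 1" by presburger
    moreover have "n \<noteq> 0" and "x div 2 \<in> weight_level m (n - 1)"
      using x False unfolding weight_level_def by auto
    ultimately have "x \<in> ?odd" by auto
    then show ?thesis by blast
  qed
next
  fix x assume "x \<in> ?even \<union> ?odd"
  then show "x \<in> weight_level (Suc m) n"
    unfolding weight_level_def by (auto split: if_splits)
qed

lemma card_weight_level: "card (weight_level m n) = m choose n"
proof (induction m arbitrary: n)
  case 0
  have "weight_level 0 n = (if n = 0 then {0} else {})" unfolding weight_level_def by auto
  then show ?case by simp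
next
  case (Suc m)
  let ?odd = "if n = 0 then {} else weight_level m (n - 1)"
  have "card (weight_level (Suc m) n) = card ((\<lambda>y. 2*y) ` weight_level m n) + card ((\<lambda>y. 2*y + 1) ` ?odd)"
    unfolding weight_level_Suc
  proof (rule card_Un_disjoint)
    have "2 * a \<noteq> 2 * b + (1::nat)" for a b by presburger
    then show "(\<lambda>y. 2*y) ` weight_level m n \<inter> (\<lambda>y. 2*y + 1) ` ?odd = {}" by auto
  qed simp_all
  also have "\<dots> = card (weight_level m n) + card ?odd"
    by (simp add: card_image inj_on_def)
  also have "\<dots> = Suc m choose n"
    using Suc.IH by (cases n) simp_all
  finally show ?case .
qed

definition level_enum :: "nat \<Rightarrow> nat \<Rightarrow> nat \<Rightarrow> nat" where
  "level_enum m n = (SOME h. bij_betw h {0..<m choose n} (weight_level m n))"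

lemma bij_betw_level_enum: "bij_betw (level_enum m n) {0..<m choose n} (weight_level m n)"
proof -
  have "\<exists>h. bij_betw h {0..<m choose n} (weight_level m n)"
    using ex_bij_betw_nat_finite[OF finite_weight_level[of m n]] card_weight_level[of m n] by simp
  then show ?thesis unfolding level_enum_def by (rule someI_ex)
qed

definition level_rank :: "nat \<Rightarrow> nat \<Rightarrow> nat" where
  "level_rank m x = inv_into {0..<m choose bit_weight m x} (level_enum m (bit_weight m x)) x"

lemma level_enum_level_rank:
  assumes "x < 2^m"
  shows "level_rank m x < m choose bit_weight m x" "level_enum m (bit_weight m x) (level_rank m x) = x"
proof -
  have xl: "x \<in> weight_level m (bit_weight m x)" using assms unfolding weight_level_def by simp
  have b: "bij_betw (level_enum m (bit_weight m x)) {0..<m choose bit_weight m x} (weight_level m (bit_weight m x))" by (rule bij_betw_level_enum)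
  then have "x \<in> level_enum m (bit_weight m x) ` {0..<m choose bit_weight m x}" using xl by (simp add: bij_betw_def)
  then have "inv_into {0..<m choose bit_weight m x} (level_enum m (bit_weight m x)) x \<in> {0..<m choose bit_weight m x}"
    and "level_enum m (bit_weight m x) (inv_into {0..<m choose bit_weight m x} (level_enum m (bit_weight m x)) x) = x"
    by (rule inv_into_into, rule f_inv_into_f)
  then show "level_rank m x < m choose bit_weight m x" "level_enum m (bit_weight m x) (level_rank m x) = x"
    unfolding level_rank_def by auto
qed

lemma level_enum_eqD:
  assumes r: "r < m choose n" and e: "level_enum m n r = x"
  shows "x < 2^m" "bit_weight m x = n" "level_rank m x = r"
proof -
  have b: "bij_betw (level_enum m n) {0..<m choose n} (weight_level m n)" by (rule bij_betw_level_enum)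
  then have "x \<in> weight_level m n" using r e by (auto simp: bij_betw_def)
  then show xl: "x < 2^m" and bx: "bit_weight m x = n" unfolding weight_level_def by auto
  have inj: "inj_on (level_enum m n) {0..<m choose n}" using b by (simp add: bij_betw_def)
  show "level_rank m x = r" unfolding level_rank_def bx using inv_into_f_f[OF inj, of r] r e by simp
qed

section \<open>The covariant channel\<close>

definition block_min :: "nat \<Rightarrow> nat \<Rightarrow> nat \<Rightarrow> nat" where
  "block_min m L q = Min ((\<lambda>k. m choose (q*L + k)) ` {..<L})"

definition covered :: "nat \<Rightarrow> nat \<Rightarrow> nat \<Rightarrow> bool" where
  "covered m L x \<longleftrightarrow> level_rank m x < block_min m L (bit_weight m x div L)"

definition block_pairs :: "nat \<Rightarrow> nat \<Rightarrow> (nat \<times> nat) set" where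
  "block_pairs m L = (SIGMA q:{..<m div L + 1}. {..<block_min m L q})"

definition residual :: "nat \<Rightarrow> nat \<Rightarrow> nat set" where
  "residual m L = {x. x < 2^m \<and> \<not> covered m L x}"

text \<open>The Kraus operator \<open>Inl (q, r)\<close>, for \<open>r < block_min m L q\<close>, maps the \<open>r\<close>-th basis
  state of weight \<open>q L + k\<close> to \<open>|k\<rangle>\<close>, stored at index \<open>K + k\<close>, for every \<open>k < L\<close>; the
  operator \<open>Inr (x, i)\<close>, for a residual basis state \<open>x\<close>, is \<open>|i\<rangle>\<langle>x| / sqrt L\<close>. Where the
  coefficient vanishes, the column \<open>kraus_col\<close> is a dummy value.\<close>

definition kraus_index :: "nat \<Rightarrow> nat \<Rightarrow> ((nat \<times> nat) + (nat \<times> nat)) set" where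
  "kraus_index m L = Inl ` block_pairs m L \<union> Inr ` (residual m L \<times> {..<L})"

fun kraus_col :: "nat \<Rightarrow> nat \<Rightarrow> nat \<Rightarrow> (nat \<times> nat) + (nat \<times> nat) \<Rightarrow> nat \<Rightarrow> nat" where
  "kraus_col m L K (Inl p) a =
     (if K \<le> a \<and> a < K + L then level_enum m (fst p * L + (a - K)) (snd p) else 0)"
| "kraus_col m L K (Inr p) a = fst p"

fun kraus_coeff :: "nat \<Rightarrow> nat \<Rightarrow> (nat \<times> nat) + (nat \<times> nat) \<Rightarrow> nat \<Rightarrow> complex" where
  "kraus_coeff L K (Inl p) a = (if K \<le> a \<and> a < K + L then 1 else 0)"
| "kraus_coeff L K (Inr p) a = (if a = K + snd p then complex_of_real (1 / sqrt (real L)) else 0)"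

definition embedding_channel :: "nat \<Rightarrow> nat \<Rightarrow> nat \<Rightarrow> complex mat \<Rightarrow> complex mat" where
  "embedding_channel m L K = sparse_kraus (2*K+1) (kraus_index m L) (kraus_col m L K) (kraus_coeff L K)"

lemma block_min_le: "k < L \<Longrightarrow> block_min m L q \<le> m choose (q*L + k)"
  unfolding block_min_def by (rule Min_le) auto

lemma block_min_attained: "L > 0 \<Longrightarrow> \<exists>k<L. block_min m L q = m choose (q*L + k)"
proof -
  assume "L > 0"
  then have "block_min m L q \<in> (\<lambda>k. m choose (q*L + k)) ` {..<L}"
    unfolding block_min_def by (intro Min_in) auto
  then show ?thesis by auto
qed

lemma mem_block_pairs: "p \<in> block_pairs m L \<longleftrightarrow> fst p < m div L + 1 \<and> snd p < block_min m L (fst p)"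
  unfolding block_pairs_def by (cases p) auto

lemma finite_block_pairs[simp]: "finite (block_pairs m L)"
  unfolding block_pairs_def by simp

lemma finite_residual[simp]: "finite (residual m L)"
  unfolding residual_def by simp

lemma finite_kraus_index[simp]: "finite (kraus_index m L)"
  unfolding kraus_index_def by simp

lemma sum_kraus_index:
  "(\<Sum>j\<in>kraus_index m L. F j) =
     (\<Sum>p\<in>block_pairs m L. F (Inl p)) + (\<Sum>y\<in>residual m L. \<Sum>i<L. F (Inr (y,i)))"
proof -
  have "(\<Sum>j\<in>kraus_index m L. F j) =
      (\<Sum>j\<in>Inl ` block_pairs m L. F j) + (\<Sum>j\<in>Inr ` (residual m L \<times> {..<L}). F j)"
    unfolding kraus_index_def by (rule sum.union_disjoint) auto
  also have "\<dots> = (\<Sum>p\<in>block_pairs m L. F (Inl p)) + (\<Sum>p\<in>residual m L \<times> {..<L}. F (Inr p))"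
    by (simp add: sum.reindex)
  also have "(\<Sum>p\<in>residual m L \<times> {..<L}. F (Inr p)) = (\<Sum>y\<in>residual m L. \<Sum>i<L. F (Inr (y,i)))"
    by (simp add: sum.cartesian_product split_def)
  finally show ?thesis .
qed

lemma block_pairs_level_enum:
  assumes "p \<in> block_pairs m L" "k < L"
  shows "level_enum m (fst p * L + k) (snd p) < 2^m"
    and "bit_weight m (level_enum m (fst p * L + k) (snd p)) = fst p * L + k"
  using level_enum_eqD[OF less_le_trans[OF _ block_min_le[OF assms(2)]] refl] assms(1)
  by (auto simp: mem_block_pairs)

lemma kraus_col_less:
  assumes "j \<in> kraus_index m L"
  shows "kraus_col m L K j a < 2^m"
  using assms block_pairs_level_enum(1)[of _ m L "a - K"]
  unfolding kraus_index_def residual_def by auto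

lemma kraus_energy_shift:
  assumes "j \<in> kraus_index m L" "kraus_coeff L K j a \<noteq> 0" "kraus_coeff L K j b \<noteq> 0"
  shows "\<delta> * real (bit_weight m (kraus_col m L K j a)) - \<delta> * real (bit_weight m (kraus_col m L K j b)) =
         (real a - real K) * \<delta> - (real b - real K) * \<delta>"
proof (cases j)
  case (Inl p)
  then have p: "p \<in> block_pairs m L" using assms(1) unfolding kraus_index_def by auto
  have weight: "bit_weight m (kraus_col m L K j c) = fst p * L + (c - K)" if "K \<le> c \<and> c < K + L" for c
  proof -
    have "c - K < L" using that by linarith
    have "kraus_col m L K j c = level_enum m (fst p * L + (c - K)) (snd p)" using that Inl by simp
    then show ?thesis using block_pairs_level_enum(2)[OF p \<open>c - K < L\<close>] by simp
  qed
  have "K \<le> a \<and> a < K + L" "K \<le> b \<and> b < K + L" using assms(2,3) Inl by (auto split: if_splits)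
  then show ?thesis
    using weight by (simp add: algebra_simps of_nat_diff)
next
  case (Inr p)
  then show ?thesis using assms(2,3) by (auto split: if_splits)
qed

lemma block_pairs_level_enum_eq_iff:
  assumes L: "L > 0" and x: "x < 2^m" and p: "p \<in> block_pairs m L" and k: "k < L"
  shows "level_enum m (fst p * L + k) (snd p) = x \<longleftrightarrow>
    p = (bit_weight m x div L, level_rank m x) \<and> k = bit_weight m x mod L \<and> covered m L x"
proof
  assume e: "level_enum m (fst p * L + k) (snd p) = x"
  have rb: "snd p < m choose (fst p * L + k)"
    using p block_min_le[OF k, of m "fst p"] by (simp add: mem_block_pairs)
  have b: "bit_weight m x = fst p * L + k" and r: "level_rank m x = snd p"
    using level_enum_eqD[OF rb e] by auto
  have "bit_weight m x div L = fst p" "bit_weight m x mod L = k" unfolding b using k by auto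
  then show "p = (bit_weight m x div L, level_rank m x) \<and> k = bit_weight m x mod L \<and> covered m L x"
    using p r unfolding covered_def by (auto simp: mem_block_pairs prod_eq_iff)
next
  assume "p = (bit_weight m x div L, level_rank m x) \<and> k = bit_weight m x mod L \<and> covered m L x"
  then show "level_enum m (fst p * L + k) (snd p) = x"
    using level_enum_level_rank[OF x] by simp
qed

lemma covered_imp_mem_block_pairs:
  "covered m L x \<Longrightarrow> (bit_weight m x div L, level_rank m x) \<in> block_pairs m L"
  using bit_weight_le[of m x] div_le_mono[of "bit_weight m x" m L]
  unfolding covered_def mem_block_pairs by auto

lemma card_covered:
  assumes L: "L > 0"
  shows "card {x. x < 2^m \<and> covered m L x} = card (block_pairs m L) * L"
proof -
  define f where "f pk = level_enum m (fst (fst pk) * L + snd pk) (snd (fst pk))" for pk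
  have f_eq_iff: "f (p, k) = x \<longleftrightarrow>
      p = (bit_weight m x div L, level_rank m x) \<and> k = bit_weight m x mod L \<and> covered m L x"
    if "x < 2^m" "p \<in> block_pairs m L" "k < L" for p k x
    using block_pairs_level_enum_eq_iff[OF L that] unfolding f_def by simp
  define g where "g x = ((bit_weight m x div L, level_rank m x), bit_weight m x mod L)" for x
  have f_props: "f (p, k) < 2^m \<and> covered m L (f (p, k)) \<and> g (f (p, k)) = (p, k)"
    if "p \<in> block_pairs m L" "k < L" for p k
  proof -
    have "f (p, k) < 2^m" using block_pairs_level_enum(1)[OF that] unfolding f_def by simp
    with f_eq_iff[OF this that] show ?thesis unfolding g_def by auto
  qed
  have g_props: "g x \<in> block_pairs m L \<times> {..<L} \<and> f (g x) = x" if "x < 2^m" "covered m L x" for x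
    using covered_imp_mem_block_pairs[OF that(2)] f_eq_iff[OF that(1)] that L unfolding g_def by auto
  have "bij_betw f (block_pairs m L \<times> {..<L}) {x. x < 2^m \<and> covered m L x}"
  proof (rule bij_betw_byWitness[where f' = g])
    show "\<forall>pk\<in>block_pairs m L \<times> {..<L}. g (f pk) = pk"
      and "f ` (block_pairs m L \<times> {..<L}) \<subseteq> {x. x < 2^m \<and> covered m L x}"
      using f_props by auto
    show "\<forall>x\<in>{x. x < 2^m \<and> covered m L x}. f (g x) = x"
      and "g ` {x. x < 2^m \<and> covered m L x} \<subseteq> block_pairs m L \<times> {..<L}"
      using g_props by blast+
  qed
  then show ?thesis by (simp add: bij_betw_same_card[symmetric] card_cartesian_product)
qed

lemma card_block_pairs_residual:
  assumes "L > 0"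
  shows "card (block_pairs m L) * L + card (residual m L) = 2^m"
proof -
  have "{..<2^m} = {x. x < 2^m \<and> covered m L x} \<union> residual m L"
    unfolding residual_def by auto
  then have "card {..<(2::nat)^m} = card {x. x < 2^m \<and> covered m L x} + card (residual m L)"
    by (simp add: card_Un_disjoint residual_def disjoint_iff)
  then show ?thesis using card_covered[OF assms] by simp
qed

lemma kraus_completeness_block_pairs:
  assumes L: "L > 0" and KL: "L \<le> K" and x: "x < 2^m"
  shows "(\<Sum>p\<in>block_pairs m L. \<Sum>a<2*K+1. if kraus_col m L K (Inl p) a = x
      then kraus_coeff L K (Inl p) a * cnj (kraus_coeff L K (Inl p) a) else 0) = (if covered m L x then 1 else 0)"
proof -
  define p0 where "p0 = (bit_weight m x div L, level_rank m x)"
  define a0 where "a0 = K + bit_weight m x mod L"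
  have summand: "(if kraus_col m L K (Inl p) a = x
      then kraus_coeff L K (Inl p) a * cnj (kraus_coeff L K (Inl p) a) else 0)
      = (if p = p0 then if a = a0 then if covered m L x then 1 else 0 else 0 else 0)"
    if p: "p \<in> block_pairs m L" for p a
  proof (cases "K \<le> a \<and> a < K + L")
    case True
    then have "a = K + (a - K)" "a - K < L" by auto
    then show ?thesis
      using block_pairs_level_enum_eq_iff[OF L x p \<open>a - K < L\<close>] True unfolding p0_def a0_def by auto
  next
    case False
    then show ?thesis using L unfolding a0_def by auto
  qed
  have "bit_weight m x mod L < L" using L by simp
  then have mem: "covered m L x \<Longrightarrow> p0 \<in> block_pairs m L \<and> a0 < 2*K+1"
    using covered_imp_mem_block_pairs[of m L x] KL unfolding p0_def a0_def by auto
  have "(\<Sum>p\<in>block_pairs m L. \<Sum>a<2*K+1. if kraus_col m L K (Inl p) a = x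
      then kraus_coeff L K (Inl p) a * cnj (kraus_coeff L K (Inl p) a) else 0)
      = (\<Sum>p\<in>block_pairs m L. \<Sum>a<2*K+1. if p = p0 then if a = a0 then if covered m L x then 1 else 0 else 0 else 0)"
    by (intro sum.cong refl) (rule summand)
  also have "\<dots> = (\<Sum>p\<in>block_pairs m L.
      if p = p0 then \<Sum>a<2*K+1. if a = a0 then if covered m L x then 1 else 0 else 0 else 0)"
    by (intro sum.cong refl) (simp del: sum.lessThan_Suc)
  also have "\<dots> = (if covered m L x then 1 else 0)"
    using mem by (simp add: sum.delta del: sum.lessThan_Suc)
  finally show ?thesis .
qed

lemma kraus_coeff_Inr_mult_cnj:
  "kraus_coeff L K (Inr (y,i)) a * cnj (kraus_coeff L K (Inr (y,i)) b) =
    (if a = K + i \<and> b = K + i then 1 / of_nat L else 0)"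
  using inverse_sqrt_mult_cnj[of "real L"] by simp

lemma kraus_completeness_residual:
  assumes L: "L > 0" and KL: "L \<le> K" and x: "x < 2^m"
  shows "(\<Sum>y\<in>residual m L. \<Sum>i<L. \<Sum>a<2*K+1. if kraus_col m L K (Inr (y,i)) a = x
      then kraus_coeff L K (Inr (y,i)) a * cnj (kraus_coeff L K (Inr (y,i)) a) else 0)
    = (if covered m L x then 0 else 1)"
proof -
  have inner: "(\<Sum>a<2*K+1. if kraus_col m L K (Inr (y,i)) a = x
      then kraus_coeff L K (Inr (y,i)) a * cnj (kraus_coeff L K (Inr (y,i)) a) else 0)
      = (if y = x then 1 / of_nat L else 0)" if "i < L" for y i
  proof -
    have "(\<Sum>a<2*K+1. if kraus_col m L K (Inr (y,i)) a = x
        then kraus_coeff L K (Inr (y,i)) a * cnj (kraus_coeff L K (Inr (y,i)) a) else 0)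
        = (\<Sum>a<2*K+1. if y = x \<and> a = K + i then 1 / of_nat L else 0)"
      by (intro sum.cong refl) (auto simp del: kraus_coeff.simps simp: kraus_coeff_Inr_mult_cnj)
    also have "\<dots> = (if y = x then 1 / of_nat L else 0)"
      using that KL by (cases "y = x") simp_all
    finally show ?thesis .
  qed
  have "(\<Sum>y\<in>residual m L. \<Sum>i<L. \<Sum>a<2*K+1. if kraus_col m L K (Inr (y,i)) a = x
      then kraus_coeff L K (Inr (y,i)) a * cnj (kraus_coeff L K (Inr (y,i)) a) else 0)
      = (\<Sum>y\<in>residual m L. \<Sum>i<L. if y = x then 1 / of_nat L else 0)"
    by (intro sum.cong refl) (simp only: inner lessThan_iff)
  also have "\<dots> = (\<Sum>y\<in>residual m L. if y = x then 1 else 0)"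
    using L by (intro sum.cong refl) simp
  finally show ?thesis using x unfolding residual_def by (simp add: sum.delta')
qed

lemma kraus_completeness:
  assumes "L > 0" "L \<le> K" "x < 2^m"
  shows "(\<Sum>j\<in>kraus_index m L. \<Sum>a<2*K+1. if kraus_col m L K j a = x
      then kraus_coeff L K j a * cnj (kraus_coeff L K j a) else 0) = 1"
  unfolding sum_kraus_index kraus_completeness_block_pairs[OF assms]
    kraus_completeness_residual[OF assms] by simp

lemma sum_kraus_coeff_mult_cnj:
  assumes "a < 2*K+1" "b < 2*K+1"
  shows "(\<Sum>j\<in>kraus_index m L. kraus_coeff L K j a * cnj (kraus_coeff L K j b)) =
     (if K \<le> a \<and> a < K + L \<and> K \<le> b \<and> b < K + L
      then of_nat (card (block_pairs m L)) + (if a = b then of_nat (card (residual m L)) / of_nat L else 0)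
      else 0)"
proof -
  have "(\<Sum>i<L. kraus_coeff L K (Inr (y,i)) a * cnj (kraus_coeff L K (Inr (y,i)) b)) =
      (if K \<le> a \<and> a < K + L \<and> a = b then 1 / of_nat L else 0)" for y
  proof (cases "K \<le> a \<and> a < K + L \<and> a = b")
    case True
    then have "(\<Sum>i<L. kraus_coeff L K (Inr (y,i)) a * cnj (kraus_coeff L K (Inr (y,i)) b)) =
        (\<Sum>i<L. if i = a - K then 1 / of_nat L else 0)"
      unfolding kraus_coeff_Inr_mult_cnj by (intro sum.cong refl) auto
    moreover have "a - K < L" using True by linarith
    ultimately show ?thesis using True by simp
  qed (auto simp: kraus_coeff_Inr_mult_cnj intro!: sum.neutral)
  then show ?thesis unfolding sum_kraus_index by auto
qed

lemma binomial_block_min_deficit: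
  assumes L: "L > 0"
  shows "real (2^m) - real L * (\<Sum>q<m div L + 1. real (block_min m L q)) \<le> 4 * real L * real (m choose (m div 2))"
proof -
  define Q where "Q = m div L + 1"
  define f where "f n = real (m choose n)" for n
  define W where "W q = (\<Sum>i<L. \<bar>f (q*L+i+1) - f (q*L+i)\<bar>)" for q
  have QL: "m < Q * L"
  proof -
    have e: "m div L * L + m mod L = m" by simp
    moreover have "m mod L < L" using L by simp
    ultimately have "m < m div L * L + L" by linarith
    then show ?thesis unfolding Q_def by (simp add: algebra_simps)
  qed
  have tot: "real (2^m) = (\<Sum>q<Q. \<Sum>k<L. f (q*L+k))"
  proof -
    have "(2::nat)^m = (\<Sum>n<Q*L. m choose n)" using sum_choose_lessThan[OF QL] by simp
    also have "\<dots> = (\<Sum>q<Q. \<Sum>k<L. m choose (q*L+k))" by (rule sum_lessThan_mult_blocks)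
    finally show ?thesis unfolding f_def by (simp add: of_nat_sum)
  qed
  have each: "f (q*L+k) - real (block_min m L q) \<le> 2 * W q" if "k < L" for q k
  proof -
    obtain k0 where k0: "k0 < L" "block_min m L q = m choose (q*L+k0)" using block_min_attained[OF L] by blast
    show ?thesis using diff_le_twice_sum_abs_steps[OF that k0(1), of f "q*L"] k0(2) unfolding W_def f_def by simp
  qed
  have "real (2^m) - real L * (\<Sum>q<Q. real (block_min m L q)) = (\<Sum>q<Q. \<Sum>k<L. f (q*L+k) - real (block_min m L q))"
    unfolding tot by (simp add: sum_subtractf sum_distrib_left)
  also have "\<dots> \<le> (\<Sum>q<Q. \<Sum>k<L. 2 * W q)"
    using each by (intro sum_mono) auto
  also have "\<dots> = 2 * real L * (\<Sum>q<Q. W q)" by (simp add: sum_distrib_left mult.assoc mult.left_commute)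
  also have "(\<Sum>q<Q. W q) = (\<Sum>n<Q*L. \<bar>f (n+1) - f n\<bar>)"
    unfolding W_def using sum_lessThan_mult_blocks[of "\<lambda>n. \<bar>f (n+1) - f n\<bar>" Q L] by (simp add: add.assoc)
  also have "\<dots> \<le> 2 * f (m div 2)" unfolding f_def by (rule sum_abs_binomial_steps_le)
  finally have "real (2^m) - real L * (\<Sum>q<Q. real (block_min m L q)) \<le> 2 * real L * (2 * f (m div 2))"
    by (simp add: mult_left_mono)
  then show ?thesis unfolding Q_def f_def by simp
qed

lemma card_residual_le:
  assumes L: "L > 0"
  shows "real (card (residual m L)) \<le> 4 * real L * real (m choose (m div 2))"
proof -
  have "card (block_pairs m L) = (\<Sum>q<m div L + 1. block_min m L q)"
    unfolding block_pairs_def by simp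
  then have "real (card (residual m L)) = 2^m - real L * (\<Sum>q<m div L + 1. real (block_min m L q))"
    using arg_cong[OF card_block_pairs_residual[OF L, of m], of real] by (simp add: algebra_simps)
  then show ?thesis using binomial_block_min_deficit[OF L, of m] by simp
qed

lemma embedding_channel_covariant:
  assumes "L > 0" "L \<le> K"
  shows "covariant_channel (ham_pow (H_T \<delta>) m) (H_T' \<delta> K) (embedding_channel m L K)"
  unfolding embedding_channel_def
proof (rule covariant_channel_sparse_kraus[where d = "2^m"
      and E = "\<lambda>x. \<delta> * real (bit_weight m x)" and E' = "\<lambda>a. (real a - real K) * \<delta>"])
  show "\<forall>j\<in>kraus_index m L. \<forall>a<2*K+1. kraus_col m L K j a < 2^m"
    using kraus_col_less by blast
  show "\<forall>x<2^m. (\<Sum>j\<in>kraus_index m L. \<Sum>a<2*K+1. if kraus_col m L K j a = x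
      then kraus_coeff L K j a * cnj (kraus_coeff L K j a) else 0) = 1"
    using kraus_completeness[OF assms] by blast
  show "dim_row (ham_pow (H_T \<delta>) m) = 2^m"
    by (rule carrier_matD(1)[OF ham_pow_carrier[OF H_T_carrier]])
  show "\<forall>x<2^m. ham_pow (H_T \<delta>) m $$ (x,x) = complex_of_real (\<delta> * real (bit_weight m x))"
    using index_ham_pow_H_T by blast
  show "\<forall>j\<in>kraus_index m L. \<forall>a<2*K+1. \<forall>b<2*K+1. kraus_coeff L K j a \<noteq> 0 \<longrightarrow> kraus_coeff L K j b \<noteq> 0 \<longrightarrow>
      \<delta> * real (bit_weight m (kraus_col m L K j a)) - \<delta> * real (bit_weight m (kraus_col m L K j b)) =
      (real a - real K) * \<delta> - (real b - real K) * \<delta>"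
    using kraus_energy_shift by blast
qed (use H_T'_carrier index_H_T' in auto)

definition residual_fraction :: "nat \<Rightarrow> nat \<Rightarrow> real" where
  "residual_fraction m L = real (card (residual m L)) / 2^m"

lemma embedding_channel_plus_state_error:
  assumes L: "L > 0"
  shows "embedding_channel m L K (tensor_pow (proj plus_state) m) - proj (eta_state K L) =
    block_mat (2*K+1) K L (of_real (residual_fraction m L / L)) (of_real (- (residual_fraction m L / L)))"
    (is "?D = ?B")
proof (rule eq_matI)
  fix a b assume "a < dim_row ?B" "b < dim_col ?B"
  then have ab: "a < 2*K+1" "b < 2*K+1" by auto
  define cT where "cT = card (block_pairs m L)"
  define cU where "cU = card (residual m L)"
  have "embedding_channel m L K (tensor_pow (proj plus_state) m) $$ (a,b)
      = (\<Sum>j\<in>kraus_index m L. kraus_coeff L K j a * cnj (kraus_coeff L K j b)) * (1/2)^m"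
    unfolding embedding_channel_def index_sparse_kraus[OF ab] sum_distrib_right
    using ab kraus_col_less tensor_pow_plus_state(2) by (intro sum.cong refl) auto
  also have "\<dots> = (if K \<le> a \<and> a < K + L \<and> K \<le> b \<and> b < K + L
      then of_real ((real cT + (if a = b then real cU / real L else 0)) / 2^m) else 0)"
    unfolding sum_kraus_coeff_mult_cnj[OF ab] cT_def cU_def by (simp add: power_one_over)
  finally have "?D $$ (a,b) = (if K \<le> a \<and> a < K + L \<and> K \<le> b \<and> b < K + L
      then of_real ((real cT + (if a = b then real cU / real L else 0)) / 2^m - 1 / real L) else 0)"
    using ab proj_eta_state(1)[of K L] proj_eta_state(2)[OF ab] by simp
  moreover have "complex_of_nat L * of_nat cT + of_nat cU = 2^m"
    using arg_cong[OF card_block_pairs_residual[OF L, of m], of "of_nat :: nat \<Rightarrow> complex"]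
    unfolding cT_def cU_def by (simp add: mult.commute)
  ultimately show "?D $$ (a,b) = ?B $$ (a,b)"
    using ab L unfolding residual_fraction_def cU_def[symmetric]
    by (simp add: index_block_mat field_simps)
qed (use proj_eta_state(1)[of K L] in auto)

lemma trace_norm_embedding_channel_error:
  assumes L: "L > 0" and KL: "L \<le> K"
  shows "trace_norm (embedding_channel m L K (tensor_pow (proj plus_state) m) - proj (eta_state K L))
    \<le> 2 * residual_fraction m L"
proof -
  have "residual_fraction m L \<ge> 0" unfolding residual_fraction_def by simp
  then have "trace_norm (embedding_channel m L K (tensor_pow (proj plus_state) m) - proj (eta_state K L))
      = 2 * (real L - 1) * (residual_fraction m L / L)"
    unfolding embedding_channel_plus_state_error[OF L] using KL L
    by (intro trace_norm_block_mat) auto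
  also have "\<dots> \<le> 2 * residual_fraction m L"
    using L \<open>residual_fraction m L \<ge> 0\<close> by (simp add: field_simps)
  finally show ?thesis .
qed

lemma residual_fraction_le:
  assumes L: "L > 0"
  shows "residual_fraction (2*N) L * sqrt (2*N+1) \<le> 4 * real L"
proof -
  have "residual_fraction (2*N) L * sqrt (2*N+1) = real (card (residual (2*N) L)) * sqrt (2*N+1) / 4^N"
    unfolding residual_fraction_def by (simp add: power_mult)
  also have "\<dots> \<le> 4 * real L * (real ((2*N) choose N) * sqrt (2*N+1)) / 4^N"
    using card_residual_le[OF L, of "2*N"] by (intro divide_right_mono) (simp_all add: mult_right_mono)
  also have "\<dots> \<le> 4 * real L * 4^N / 4^N"
    using central_binomial_sqrt_le[of N] by (intro divide_right_mono mult_left_mono) simp_all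
  finally show ?thesis by simp
qed

theorem mainTheorem5:
  fixes \<delta> :: real and L K :: nat
  assumes "\<delta> \<noteq> 0" and "L > 0" and "K > L"
  shows "\<forall>\<epsilon>>0. \<exists>m::nat. \<exists>\<Phi>.
           covariant_channel (ham_pow (H_T \<delta>) m) (H_T' \<delta> K) \<Phi> \<and>
           trace_norm (\<Phi> (tensor_pow (proj plus_state) m) - proj (eta_state K L)) \<le> \<epsilon>"
proof (intro allI impI)
  fix \<epsilon> :: real assume "\<epsilon> > 0"
  have L: "L > 0" and KL: "L \<le> K" using assms by auto
  obtain N :: nat where N: "(8 * real L / \<epsilon>)^2 \<le> real N"
    using real_arch_simple by blast
  have "8 * real L / \<epsilon> \<le> sqrt (2*N+1)"
    using N real_le_rsqrt[OF N] by (simp add: order_trans[OF _ real_sqrt_le_mono])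
  then have "8 * real L \<le> \<epsilon> * sqrt (2*N+1)"
    using \<open>\<epsilon> > 0\<close> by (simp add: divide_le_eq mult.commute)
  then have "2 * residual_fraction (2*N) L * sqrt (2*N+1) \<le> \<epsilon> * sqrt (2*N+1)"
    using residual_fraction_le[OF L, of N] by linarith
  then have "2 * residual_fraction (2*N) L \<le> \<epsilon>"
    by (rule mult_right_le_imp_le) simp
  then show "\<exists>m \<Phi>. covariant_channel (ham_pow (H_T \<delta>) m) (H_T' \<delta> K) \<Phi> \<and>
      trace_norm (\<Phi> (tensor_pow (proj plus_state) m) - proj (eta_state K L)) \<le> \<epsilon>"
    using embedding_channel_covariant[OF L KL] trace_norm_embedding_channel_error[OF L KL]
    by (meson order_trans)
qed

end
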